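(* Setting and construction as in the context. Assume $g$ is convex and Lipschitz continuous. Then: (a) $\underline{v}(t,x)\le v(t,x)$ for all $(t,x)\in[0,T]\times\mathbb{R}^n$. (b) Assume additionally that for every $s\in[0,T]$ the set $\mathbb{W}(s)=B(s)\mathbb{U}\ominus(-E(s)\mathbb{D})$ is nonempty and $\mathbb{W}(s)\oplus(-E(s)\mathbb{D})=B(s)\mathbb{U}$. Fix $t\in[0,T]$, $k\in\{1,\dots,N\}$, $i\in\{1,\dots,n_k\}$, and suppose $(\xi^\star,\omega^\star)$ with $\omega^\star\in\mathscr{W}[t,T]$ and $\xi^\star(T)=\bar x_{i,k}$ satisfies, together with $\lambda=\lambda_{i,k}$, the system $\dot\xi^\star(s)=A(s)\xi^\star(s)+\omega^\star(s)$, $\dot\lambda(s)=-A(s)'\lambda(s)$ a.e. $s\in(t,T)$, $\omega^\star(s)\in\arg\max_{\omega\in\mathbb{W}(s)}\langle-\lambda(s),\omega\rangle$, $\lambda(T)\in D^-g(\bar x_{i,k})$. Then $v(t,\xi^\star(t))=\underline{v}(t,\xi^\star(t))=\gamma_k$.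
   Context: Fix $T>0$, integers $n,m,\ell\ge1$, $A\in C([0,T];\mathbb{R}^{n\times n})$, $B\in C([0,T];\mathbb{R}^{n\times m})$, $E\in C([0,T];\mathbb{R}^{n\times\ell})$, compact convex nonempty $\mathbb{U}\subset\mathbb{R}^m$, $\mathbb{D}\subset\mathbb{R}^\ell$, and $g\in C(\mathbb{R}^n;\mathbb{R})$. $\mathscr{U}[t,T]$, $\mathscr{D}[t,T]$ are the measurable maps $[t,T]\to\mathbb{U}$, $\to\mathbb{D}$; $\xi^{u,d}_{t,x}$ solves $\dot\xi=A\xi+Bu+Ed$ a.e. on $(t,T)$, $\xi(t)=x$. $\Delta[t,T]$ is the set of non-anticipative $\delta:\mathscr{U}[t,T]\to\mathscr{D}[t,T]$ ($u_1=u_2$ a.e. on $[t,s]$ implies $\delta[u_1]=\delta[u_2]$ a.e. on $[t,s]$, for every $s\in[t,T]$). Value function: $v(t,x)=\sup_{\delta\in\Delta[t,T]}\inf_{u\in\mathscr{U}[t,T]}g(\xi^{u,\delta[u]}_{t,x}(T))$. $Y\oplus Z=\{y+z\}$, $Y\ominus Z=\{c:\{c\}\oplus Z\subseteq Y\}$, $PY=\{Py:y\in Y\}$; $\mathscr{W}[t,T]$ is the set of measurable $\omega:[t,T]\to\mathbb{R}^n$ with $\omega(s)\in\mathbb{W}(s)$. $D^-g(\bar x)$ is the set of $p$ with $\liminf_{x\to\bar x}\frac{g(x)-g(\bar x)-\langle p,x-\bar x\rangle}{\|x-\bar x\|}\ge0$. Construction of $\underline{v}$: $N\in\mathbb{N}$,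 levels $\gamma_1,\dots,\gamma_N\in g(\mathbb{R}^n)$, $n_k\in\mathbb{N}$, points $\bar x_{i,k}\in g^{-1}(\{\gamma_k\})$, $p_{i,k}\in D^-g(\bar x_{i,k})$; $(\lambda_{i,k},q_{i,k})$ solve on $[0,T]$: $\dot\lambda=-A'\lambda$, $\dot q(s)=\max_{u\in\mathbb{U}}\min_{d\in\mathbb{D}}\langle-\lambda(s),B(s)u+E(s)d\rangle$, $\lambda_{i,k}(T)=p_{i,k}$, $q_{i,k}(T)=-\langle p_{i,k},\bar x_{i,k}\rangle+\gamma_k$; $\underline{v}(t,x)=\max_k\max_i(\langle\lambda_{i,k}(t),x\rangle+q_{i,k}(t))$. *)

theory Defs
  imports "HOL-Analysis.Analysis"
begin

definition ctrl_set :: "real \<Rightarrow> real \<Rightarrow> 'a::euclidean_space set \<Rightarrow> (real \<Rightarrow> 'a) set" where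
  "ctrl_set t T S = {u. u \<in> borel_measurable (lebesgue_on {t..T}) \<and> (\<forall>s\<in>{t..T}. u s \<in> S)}"

definition nonanticip ::
  "real \<Rightarrow> real \<Rightarrow> 'm::euclidean_space set \<Rightarrow> 'd::euclidean_space set
     \<Rightarrow> ((real \<Rightarrow> 'm) \<Rightarrow> (real \<Rightarrow> 'd)) set" where
  "nonanticip t T U D = {\<delta>.
     (\<forall>u\<in>ctrl_set t T U. \<delta> u \<in> ctrl_set t T D) \<and>
     (\<forall>u1\<in>ctrl_set t T U. \<forall>u2\<in>ctrl_set t T U. \<forall>s\<in>{t..T}.
        (AE r in lebesgue_on {t..s}. u1 r = u2 r) \<longrightarrow>
        (AE r in lebesgue_on {t..s}. \<delta> u1 r = \<delta> u2 r))}"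

text \<open>xi solves xi' = A xi + f a.e. on (t,T), xi(t) = x (absolutely continuous
  solution, in integral form).\<close>
definition is_traj ::
  "real \<Rightarrow> (real \<Rightarrow> real^'n^'n) \<Rightarrow> (real \<Rightarrow> real^'n) \<Rightarrow> real \<Rightarrow> real^'n
     \<Rightarrow> (real \<Rightarrow> real^'n) \<Rightarrow> bool" where
  "is_traj T A f t x \<xi> \<longleftrightarrow>
     (\<forall>s\<in>{t..T}. ((\<lambda>r. A r *v \<xi> r + f r) has_integral (\<xi> s - x)) {t..s})"

definition endpoint ::
  "real \<Rightarrow> (real \<Rightarrow> real^'n^'n) \<Rightarrow> (real \<Rightarrow> real^'m^'n) \<Rightarrow> (real \<Rightarrow> real^'l^'n)
     \<Rightarrow> real \<Rightarrow> real^'n \<Rightarrow> (real \<Rightarrow> real^'m) \<Rightarrow> (real \<Rightarrow> real^'l) \<Rightarrow> real^'n" where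
  "endpoint T A B E t x u d =
     (THE y. \<exists>\<xi>. is_traj T A (\<lambda>r. B r *v u r + E r *v d r) t x \<xi> \<and> \<xi> T = y)"

definition value_fn ::
  "real \<Rightarrow> (real \<Rightarrow> real^'n^'n) \<Rightarrow> (real \<Rightarrow> real^'m^'n) \<Rightarrow> (real \<Rightarrow> real^'l^'n)
     \<Rightarrow> (real^'m) set \<Rightarrow> (real^'l) set \<Rightarrow> (real^'n \<Rightarrow> real) \<Rightarrow> real \<Rightarrow> real^'n \<Rightarrow> real" where
  "value_fn T A B E U D g t x =
     (SUP \<delta>\<in>nonanticip t T U D. INF u\<in>ctrl_set t T U. g (endpoint T A B E t x u (\<delta> u)))"

definition frechet_subdiff :: "('a::real_inner \<Rightarrow> real) \<Rightarrow> 'a \<Rightarrow> 'a set" where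
  "frechet_subdiff g xb = {p.
     Liminf (at xb) (\<lambda>x. ereal ((g x - g xb - inner p (x - xb)) / norm (x - xb))) \<ge> 0}"

text \<open>max_{u in U} min_{d in D} <-lam, B(s)u + E(s)d> (max/min attained by compactness).\<close>
definition hamil ::
  "(real \<Rightarrow> real^'m^'n) \<Rightarrow> (real \<Rightarrow> real^'l^'n) \<Rightarrow> (real^'m) set \<Rightarrow> (real^'l) set
     \<Rightarrow> real^'n \<Rightarrow> real \<Rightarrow> real" where
  "hamil B E U D lam s = (SUP u\<in>U. INF d\<in>D. inner (- lam) (B s *v u + E s *v d))"

definition msum :: "'a::ab_group_add set \<Rightarrow> 'a set \<Rightarrow> 'a set" where
  "msum Y Z = {y + z | y z. y \<in> Y \<and> z \<in> Z}"

definition mdiff :: "'a::ab_group_add set \<Rightarrow> 'a set \<Rightarrow> 'a set" where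
  "mdiff Y Z = {c. msum {c} Z \<subseteq> Y}"

definition Wset ::
  "(real \<Rightarrow> real^'m^'n) \<Rightarrow> (real \<Rightarrow> real^'l^'n) \<Rightarrow> (real^'m) set \<Rightarrow> (real^'l) set
     \<Rightarrow> real \<Rightarrow> (real^'n) set" where
  "Wset B E U D s = mdiff ((\<lambda>u. B s *v u) ` U) ((\<lambda>d. - (E s *v d)) ` D)"

definition vlow ::
  "(nat \<Rightarrow> nat \<Rightarrow> real \<Rightarrow> real^'n) \<Rightarrow> (nat \<Rightarrow> nat \<Rightarrow> real \<Rightarrow> real) \<Rightarrow> nat \<Rightarrow> (nat \<Rightarrow> nat)
     \<Rightarrow> real \<Rightarrow> real^'n \<Rightarrow> real" where
  "vlow lam q N nk t x =
     Max {inner (lam i k t) x + q i k t | i k. k \<in> {1..N} \<and> i \<in> {1..nk k}}"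

end

theory Submission
  imports Defs
begin

(*
  Write G(s) = <lam(s), xi(s)> + q(s) for a response xi of the game.  Because lam solves the
  adjoint equation, the A-terms cancel and G' = <lam, B u + E d> + H(lam) almost everywhere
  (made rigorous in integrated form by an epsilon-delta argument on [t, T]).

  (a) Let the disturbance be an open-loop (hence non-anticipative) near-minimiser of
  <-lam, E d>.  Then G' >= -eps for every control, and convexity of g gives
  G(T) <= g(xi(T)), so every affine function <lam_ik(t), x> + q_ik(t) lies below v.

  (b) Along the extremal pair xi_s, omega_s the identity W + (-E D) = B U makes G' <= 0, so
  gamma_k = G(T) <= G(t) <= lower v <= v.  Conversely, against any non-anticipative strategy
  the minimiser tracks xi_s: on a fine grid it plays on each cell the control minimising
  <xi - xi_s, B u> at the left end point.  Since omega_s - E d lies in B U for every d, the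
  squared tracking error obeys a discrete Gronwall recursion with small increments, so
  xi(T) -> xi_s(T), and Lipschitz continuity of g gives v <= g(xi_s(T)) = gamma_k.
*)

lemma norm_matrix_vector_mult_le:
  fixes M :: "real^'m^'n"
  shows "norm (M *v x) \<le> norm M * norm x"
proof -
  have row: "\<bar>(M *v x) $ i\<bar> \<le> norm (M $ i) * norm x" for i
  proof -
    have "(M *v x) $ i = inner (M $ i) x"
      by (simp add: matrix_vector_mult_def inner_vec_def)
    then show ?thesis by (simp add: Cauchy_Schwarz_ineq2)
  qed
  have "norm (M *v x) = L2_set (\<lambda>i. \<bar>(M *v x) $ i\<bar>) UNIV"
    by (simp add: norm_vec_def)
  also have "\<dots> \<le> L2_set (\<lambda>i. norm (M $ i) * norm x) UNIV"
    by (rule L2_set_mono) (use row in auto)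
  also have "\<dots> = norm M * norm x"
    by (simp add: L2_set_left_distrib norm_vec_def)
  finally show ?thesis .
qed

lemma inner_transpose_matrix_vector:
  fixes M :: "real^'n^'m"
  shows "inner (transpose M *v a) b = inner a (M *v b)"
  by (simp add: transpose_matrix_vector dot_lmul_matrix)

lemma continuous_on_matrix_vector_mult:
  fixes A :: "'a::topological_space \<Rightarrow> real^'m^'n"
  assumes "continuous_on S A" "continuous_on S \<phi>"
  shows "continuous_on S (\<lambda>r. A r *v \<phi> r)"
  unfolding matrix_vector_mult_def
  by (intro continuous_on_vec_lambda continuous_intros continuous_on_component assms)

lemma continuous_on_transpose:
  fixes E :: "'a::topological_space \<Rightarrow> real^'m^'n"
  shows "continuous_on S E \<Longrightarrow> continuous_on S (\<lambda>r. transpose (E r))"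
  unfolding transpose_def by (intro continuous_on_vec_lambda continuous_on_component)

lemma compact_continuous_matrix_bound:
  fixes A :: "'a::topological_space \<Rightarrow> real^'m^'n"
  assumes "continuous_on S A" "compact S"
  obtains \<alpha> where "\<alpha> \<ge> 0" "\<And>s y. s \<in> S \<Longrightarrow> norm (A s *v y) \<le> \<alpha> * norm y"
proof -
  obtain R where R: "R > 0" "\<And>s. s \<in> S \<Longrightarrow> norm (A s) \<le> R"
    using compact_imp_bounded[OF compact_continuous_image[OF assms]] by (auto simp: bounded_pos)
  show ?thesis
  proof (rule that[of R])
    fix s y assume "s \<in> S"
    then show "norm (A s *v y) \<le> R * norm y"
      using norm_matrix_vector_mult_le[of "A s" y] R(2) by (meson mult_right_mono norm_ge_zero order_trans)
  qed (use R in auto)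
qed

lemma gronwall_inequality:
  fixes \<phi> :: "real \<Rightarrow> real"
  assumes tT: "t \<le> T" and cont: "continuous_on {t..T} \<phi>" and \<alpha>: "\<alpha> \<ge> 0"
    and le: "\<And>s. s \<in> {t..T} \<Longrightarrow> \<phi> s \<le> c + \<alpha> * integral {t..s} \<phi>"
    and s: "s \<in> {t..T}"
  shows "\<phi> s \<le> c * exp (\<alpha> * (s - t))"
proof (cases "s = t")
  case True
  then show ?thesis using le[OF s] by simp
next
  case False
  then have ts: "t < s" using s by auto
  have contS: "continuous_on {t..s} \<phi>" using cont s by (auto intro: continuous_on_subset)
  \<comment> \<open>\<open>H\<close> is the integral form of the bound, damped by \<open>exp (- \<alpha> (r - t))\<close>; it is nonincreasing.\<close>
  define H where "H r = exp (- \<alpha> * (r - t)) * (c + \<alpha> * integral {t..r} \<phi>)" for r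
  define H' where "H' r = exp (- \<alpha> * (r - t)) * (- \<alpha>) * (c + \<alpha> * integral {t..r} \<phi>)
      + exp (- \<alpha> * (r - t)) * (\<alpha> * \<phi> r)" for r
  have D: "(H has_derivative (*) (H' r)) (at r within {t..s})" if "t \<le> r" "r \<le> s" for r
  proof -
    have G: "((\<lambda>u. integral {t..u} \<phi>) has_real_derivative \<phi> r) (at r within {t..s})"
      using integral_has_vector_derivative[OF contS, of r] that
      by (simp add: has_real_derivative_iff_has_vector_derivative)
    have "(H has_real_derivative H' r) (at r within {t..s})"
      unfolding H_def H'_def by (rule derivative_eq_intros G refl | simp)+
    then show ?thesis by (simp add: has_field_derivative_def)
  qed
  obtain z where z: "z \<in> {t<..<s}" "H s - H t = H' z * (s - t)"
    using mvt_simple[OF ts D] by auto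
  have "H' z = exp (- \<alpha> * (z - t)) * \<alpha> * (\<phi> z - (c + \<alpha> * integral {t..z} \<phi>))"
    unfolding H'_def by (simp add: algebra_simps)
  also have "\<dots> \<le> 0"
    using le[of z] z s \<alpha> by (intro mult_nonneg_nonpos) auto
  finally have "H' z * (s - t) \<le> 0" using ts by (simp add: mult_nonpos_nonneg)
  then have "H s \<le> H t" using z by linarith
  then have "exp (- \<alpha> * (s - t)) * (c + \<alpha> * integral {t..s} \<phi>) \<le> c"
    by (simp add: H_def)
  then have "exp (\<alpha> * (s - t)) * (exp (- \<alpha> * (s - t)) * (c + \<alpha> * integral {t..s} \<phi>))
      \<le> exp (\<alpha> * (s - t)) * c"
    by (intro mult_left_mono) auto
  then have "c + \<alpha> * integral {t..s} \<phi> \<le> c * exp (\<alpha> * (s - t))"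
    by (simp add: mult.assoc[symmetric] exp_add[symmetric] mult.commute)
  then show ?thesis using le[OF s] by linarith
qed

lemma discrete_gronwall:
  fixes a :: "nat \<Rightarrow> real"
  assumes step: "\<And>j. j < N \<Longrightarrow> a (Suc j) \<le> (1 + \<beta>) * a j + c" and a0: "a 0 \<le> 0"
    and \<beta>: "\<beta> \<ge> 0" and c: "c \<ge> 0"
  shows "a N \<le> exp (real N * \<beta>) * real N * c"
proof -
  have "a j \<le> (1 + \<beta>) ^ j * real j * c" if "j \<le> N" for j
    using that
  proof (induction j)
    case 0
    then show ?case using a0 by simp
  next
    case (Suc j)
    have "c \<le> (1 + \<beta>) ^ Suc j * c"
      using mult_right_mono[OF one_le_power[of "1 + \<beta>" "Suc j"] c] \<beta> by simp
    then have "(1 + \<beta>) * ((1 + \<beta>) ^ j * real j * c) + c \<le> (1 + \<beta>) ^ Suc j * real (Suc j) * c"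
      by (simp add: algebra_simps)
    moreover have "(1 + \<beta>) * a j \<le> (1 + \<beta>) * ((1 + \<beta>) ^ j * real j * c)"
      using Suc \<beta> by (intro mult_left_mono) auto
    ultimately show ?case using step[of j] Suc.prems by linarith
  qed
  moreover have "(1 + \<beta>) ^ N \<le> exp (real N * \<beta>)"
  proof -
    have "(1 + \<beta>) ^ N \<le> exp \<beta> ^ N"
      using \<beta> exp_ge_add_one_self[of \<beta>] by (intro power_mono) auto
    then show ?thesis by (simp add: exp_of_nat_mult)
  qed
  ultimately show ?thesis
    using c by (meson mult_nonneg_nonneg mult_right_mono of_nat_0_le_iff order.refl order_trans)
qed

lemma eq_if_uniformly_small_increments:
  fixes \<Phi> :: "real \<Rightarrow> 'a::real_normed_vector"
  assumes ab: "a \<le> b"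
    and small: "\<And>\<epsilon>. \<epsilon> > 0 \<Longrightarrow> \<exists>\<delta>>0. \<forall>s1 s2. a \<le> s1 \<longrightarrow> s1 \<le> s2 \<longrightarrow> s2 \<le> b \<longrightarrow> s2 - s1 < \<delta>
        \<longrightarrow> norm (\<Phi> s2 - \<Phi> s1) \<le> \<epsilon> * (s2 - s1)"
  shows "\<Phi> b = \<Phi> a"
proof -
  have bound: "norm (\<Phi> b - \<Phi> a) \<le> \<epsilon> * (b - a)" if \<epsilon>: "\<epsilon> > 0" for \<epsilon>
  proof -
    obtain \<delta> where \<delta>: "\<delta> > 0" "\<And>s1 s2. a \<le> s1 \<Longrightarrow> s1 \<le> s2 \<Longrightarrow> s2 \<le> b \<Longrightarrow> s2 - s1 < \<delta>
        \<Longrightarrow> norm (\<Phi> s2 - \<Phi> s1) \<le> \<epsilon> * (s2 - s1)"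
      using small[OF \<epsilon>] by blast
    obtain N :: nat where N: "real N > (b - a) / \<delta>" "N \<ge> 1"
      using reals_Archimedean2[of "max 1 ((b - a) / \<delta>)"] by auto
    define h where "h = (b - a) / real N"
    have h: "0 \<le> h" "h < \<delta>"
      using N \<delta>(1) ab by (auto simp: h_def field_simps)
    define s where "s j = a + real j * h" for j
    have step: "norm (\<Phi> (s (Suc j)) - \<Phi> (s j)) \<le> \<epsilon> * h" if "j < N" for j
    proof -
      have "real (Suc j) * h \<le> real N * h" using that h by (intro mult_right_mono) auto
      then have "s (Suc j) \<le> b" using N(2) by (simp add: s_def h_def)
      then show ?thesis using \<delta>(2)[of "s j" "s (Suc j)"] h by (simp add: s_def algebra_simps)
    qed
    have "\<Phi> b - \<Phi> a = (\<Sum>j<N. \<Phi> (s (Suc j)) - \<Phi> (s j))"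
      using sum_lessThan_telescope[of "\<lambda>j. \<Phi> (s j)" N] N(2) by (simp add: s_def h_def)
    also have "norm \<dots> \<le> (\<Sum>j<N. \<epsilon> * h)"
      by (rule order_trans[OF norm_sum sum_mono]) (use step in auto)
    also have "\<dots> = \<epsilon> * (b - a)" using N(2) by (simp add: h_def)
    finally show ?thesis .
  qed
  have "norm (\<Phi> b - \<Phi> a) \<le> 0"
  proof (cases "a = b")
    case False
    show ?thesis
    proof (rule field_le_epsilon)
      fix \<epsilon> :: real assume "\<epsilon> > 0"
      then show "norm (\<Phi> b - \<Phi> a) \<le> 0 + \<epsilon>"
        using bound[of "\<epsilon> / (b - a)"] ab False by simp
    qed
  qed simp
  then show ?thesis by simp
qed

lemma frechet_subdiff_convex_le:
  fixes g :: "'a::real_inner \<Rightarrow> real"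
  assumes cv: "convex_on UNIV g" and p: "p \<in> frechet_subdiff g xb"
  shows "g xb + inner p (y - xb) \<le> g y"
proof (rule ccontr)
  assume neg: "\<not> g xb + inner p (y - xb) \<le> g y"
  then have ny: "norm (y - xb) > 0" by auto
  define \<kappa> where "\<kappa> = (g xb + inner p (y - xb) - g y) / norm (y - xb)"
  have \<kappa>: "\<kappa> > 0" using neg ny by (simp add: \<kappa>_def)
  have "\<forall>y<0. \<forall>\<^sub>F x in at xb. y < ereal ((g x - g xb - inner p (x - xb)) / norm (x - xb))"
    using p unfolding frechet_subdiff_def le_Liminf_iff by simp
  moreover have "ereal (- \<kappa>) < 0" using \<kappa> by simp
  ultimately have "\<forall>\<^sub>F x in at xb. ereal (- \<kappa>) < ereal ((g x - g xb - inner p (x - xb)) / norm (x - xb))"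
    by blast
  then obtain d where d: "d > 0"
    "\<And>x. x \<noteq> xb \<Longrightarrow> dist x xb < d \<Longrightarrow> - \<kappa> < (g x - g xb - inner p (x - xb)) / norm (x - xb)"
    unfolding eventually_at by auto
  \<comment> \<open>By convexity the difference quotient along the segment towards \<open>y\<close> is at most \<open>- \<kappa>\<close>.\<close>
  define \<tau> where "\<tau> = min 1 (d / (2 * norm (y - xb)))"
  have \<tau>: "\<tau> > 0" "\<tau> \<le> 1" "\<tau> * norm (y - xb) < d"
    using d ny by (auto simp: \<tau>_def min_mult_distrib_right)
  define z where "z = (1 - \<tau>) *\<^sub>R xb + \<tau> *\<^sub>R y"
  have zx: "z - xb = \<tau> *\<^sub>R (y - xb)" by (simp add: z_def algebra_simps)
  have nz: "norm (z - xb) = \<tau> * norm (y - xb)" using \<tau> by (simp add: zx)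
  have gz: "g z \<le> (1 - \<tau>) * g xb + \<tau> * g y"
    unfolding z_def by (rule convex_onD[OF cv]) (use \<tau> in auto)
  have "z \<noteq> xb" using nz \<tau> ny by auto
  then have "- \<kappa> < (g z - g xb - inner p (z - xb)) / norm (z - xb)"
    using d(2)[of z] nz \<tau> by (simp add: dist_norm)
  also have "\<dots> \<le> (\<tau> * (g y - g xb) - \<tau> * inner p (y - xb)) / (\<tau> * norm (y - xb))"
    unfolding nz using gz \<tau> ny by (intro divide_right_mono) (auto simp: zx algebra_simps)
  also have "\<dots> = - \<kappa>"
    using \<tau> ny by (simp add: \<kappa>_def field_simps)
  finally show False by simp
qed

lemma integrable_on_if_bounded_measurable:
  fixes f :: "real \<Rightarrow> 'a::euclidean_space"
  assumes "f \<in> borel_measurable (lebesgue_on {a..b})" "\<And>s. s \<in> {a..b} \<Longrightarrow> norm (f s) \<le> F"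
  shows "f integrable_on {a..b}"
proof -
  have "integrable (lebesgue_on {a..b}) f"
    by (rule finite_measure.integrable_const_bound[OF finite_measure_lebesgue_on _ assms(1), of F])
       (use assms(2) in auto)
  then show ?thesis by (rule integrable_on_lebesgue_on) simp
qed

lemma AE_lebesgue_on_imp_negligible:
  fixes a b :: real
  assumes "AE r in lebesgue_on {a..b}. P r"
  obtains N where "negligible N" "\<And>r. r \<in> {a..b} \<Longrightarrow> r \<notin> N \<Longrightarrow> P r"
proof -
  have "AE r in lebesgue. r \<in> {a..b} \<longrightarrow> P r"
    using assms by (subst (asm) AE_restrict_space_iff) auto
  then obtain N where "negligible N" "{r. \<not> (r \<in> {a..b} \<longrightarrow> P r)} \<subseteq> N"
    unfolding eventually_ae_filter_negligible by blast
  then show ?thesis using that by blast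
qed

lemma AE_lebesgue_on_except_point:
  fixes a b :: real
  assumes "\<And>r. r \<in> {a..b} \<Longrightarrow> r \<noteq> c \<Longrightarrow> P r"
  shows "AE r in lebesgue_on {a..b}. P r"
proof (rule AE_I')
  show "{c} \<inter> {a..b} \<in> null_sets (lebesgue_on {a..b})"
    by (subst null_sets_restrict_space) (auto simp: negligible_iff_null_sets[symmetric]
        intro: negligible_subset[OF negligible_sing])
  show "{r \<in> space (lebesgue_on {a..b}). \<not> P r} \<subseteq> {c} \<inter> {a..b}"
    using assms by auto
qed

lemma integral_nonpos_AE:
  fixes g :: "real \<Rightarrow> real"
  assumes "g integrable_on {a..b}" "AE r in lebesgue_on {a..b}. g r \<le> 0"
  shows "integral {a..b} g \<le> 0"
proof -
  obtain N where N: "negligible N" "\<And>r. r \<in> {a..b} \<Longrightarrow> r \<notin> N \<Longrightarrow> g r \<le> 0"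
    using AE_lebesgue_on_imp_negligible[OF assms(2)] by blast
  define g' where "g' r = (if r \<in> N then 0 else g r)" for r
  have "(g' has_integral integral {a..b} g) {a..b}"
    by (rule has_integral_spike[OF N(1) _ integrable_integral[OF assms(1)]]) (auto simp: g'_def)
  moreover have "((\<lambda>_. 0::real) has_integral 0) {a..b}" by simp
  ultimately show ?thesis
    by (rule has_integral_le) (use N(2) in \<open>auto simp: g'_def\<close>)
qed

lemma has_integral_le_const_except_finite:
  fixes f :: "real \<Rightarrow> real"
  assumes "(f has_integral i) {a..b}" "a \<le> b" "finite S" "\<And>x. x \<in> {a..b} - S \<Longrightarrow> f x \<le> c"
  shows "i \<le> c * (b - a)"
proof -
  define f' where "f' x = (if x \<in> S then c else f x)" for x
  have "(f' has_integral i) {a..b}"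
    by (rule has_integral_spike_finite[OF assms(3) _ assms(1)]) (auto simp: f'_def)
  moreover have "((\<lambda>_. c) has_integral c * (b - a)) {a..b}"
    using has_integral_const_real[of c a b] assms(2) by (simp add: mult.commute)
  ultimately show ?thesis
    by (rule has_integral_le) (use assms(4) in \<open>auto simp: f'_def\<close>)
qed

lemma inner_integrable_if_continuous_bounded:
  fixes lam f :: "real \<Rightarrow> 'a::euclidean_space"
  assumes "continuous_on {a..b} lam" "f integrable_on {a..b}" "\<And>r. r \<in> {a..b} \<Longrightarrow> norm (f r) \<le> F"
  shows "(\<lambda>r. inner (lam r) (f r)) integrable_on {a..b}"
proof -
  obtain L where L: "L > 0" "\<And>y. y \<in> lam ` {a..b} \<Longrightarrow> norm y \<le> L"
    using compact_imp_bounded[OF compact_continuous_image[OF assms(1) compact_Icc]]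
    unfolding bounded_pos by blast
  show ?thesis
  proof (rule integrable_on_if_bounded_measurable)
    show "(\<lambda>r. inner (lam r) (f r)) \<in> borel_measurable (lebesgue_on {a..b})"
      by (intro borel_measurable_inner continuous_imp_measurable_on_sets_lebesgue assms(1)
          integrable_imp_measurable assms(2)) auto
    fix s assume s: "s \<in> {a..b}"
    have "norm (inner (lam s) (f s)) \<le> norm (lam s) * norm (f s)"
      by (simp add: Cauchy_Schwarz_ineq2)
    also have "\<dots> \<le> L * F"
      using L s assms(3)[OF s] by (intro mult_mono) auto
    finally show "norm (inner (lam s) (f s)) \<le> L * F" .
  qed
qed

lemma measurable_matrix_vector_mult:
  fixes B :: "real \<Rightarrow> real^'m^'n"
  assumes "continuous_on S B" "S \<in> sets lebesgue" "u \<in> borel_measurable (lebesgue_on S)"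
  shows "(\<lambda>r. B r *v u r) \<in> borel_measurable (lebesgue_on S)"
proof -
  have "continuous_on UNIV (\<lambda>p::(real^'m^'n) \<times> (real^'m). fst p *v snd p)"
    unfolding matrix_vector_mult_def
    by (intro continuous_on_vec_lambda continuous_intros continuous_on_component)
  then show ?thesis
    using borel_measurable_continuous_Pair[OF continuous_imp_measurable_on_sets_lebesgue[OF assms(1,2)]
        assms(3), of "(*v)"] by simp
qed

lemma rec_nat_fun_upd:
  fixes upd :: "nat \<Rightarrow> (nat \<Rightarrow> 'a) \<Rightarrow> 'a" and c0 :: "nat \<Rightarrow> 'a"
  defines "c \<equiv> rec_nat c0 (\<lambda>j c. c(j := upd j c))"
  shows rec_nat_fun_upd_fixed: "i < j \<Longrightarrow> c j i = upd i (c i)"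
    and rec_nat_fun_upd_stable: "l < i \<Longrightarrow> i \<le> j \<Longrightarrow> c j l = c i l"
proof -
  show fixed: "i < j \<Longrightarrow> c j i = upd i (c i)" for i j
    by (induction j) (auto simp: c_def less_Suc_eq)
  show "l < i \<Longrightarrow> i \<le> j \<Longrightarrow> c j l = c i l"
    using fixed[of l j] fixed[of l i] by simp
qed

section \<open>Solutions of the linear state equation\<close>

lemma is_traj_eq_integral:
  assumes "is_traj T A f t x \<xi>" "s \<in> {t..T}"
  shows "\<xi> s = x + integral {t..s} (\<lambda>r. A r *v \<xi> r + f r)"
proof -
  have "integral {t..s} (\<lambda>r. A r *v \<xi> r + f r) = \<xi> s - x"
    using assms unfolding is_traj_def by (intro integral_unique) auto
  then show ?thesis by simp
qed

lemma is_traj_initial: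
  assumes "is_traj T A f t x \<xi>" "t \<le> T"
  shows "\<xi> t = x"
  using is_traj_eq_integral[OF assms(1), of t] assms(2) by simp

lemma is_traj_restrict:
  assumes "is_traj T A f t x \<xi>" "T' \<le> T"
  shows "is_traj T' A f t x \<xi>"
  using assms unfolding is_traj_def by auto

lemma is_traj_continuous_on:
  assumes \<xi>: "is_traj T A f t x \<xi>" and tT: "t \<le> T"
  shows "continuous_on {t..T} \<xi>"
proof -
  have "(\<lambda>r. A r *v \<xi> r + f r) integrable_on {t..T}"
    using \<xi> tT unfolding is_traj_def by auto
  then have "continuous_on {t..T} (\<lambda>s. x + integral {t..s} (\<lambda>r. A r *v \<xi> r + f r))"
    by (intro continuous_intros indefinite_integral_continuous_1)
  then show ?thesis
    by (rule continuous_on_eq) (use is_traj_eq_integral[OF \<xi>] in auto)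
qed

lemma is_traj_has_integral:
  assumes \<xi>: "is_traj T A f t x \<xi>" and s: "t \<le> s1" "s1 \<le> s2" "s2 \<le> T"
  shows "((\<lambda>r. A r *v \<xi> r + f r) has_integral (\<xi> s2 - \<xi> s1)) {s1..s2}"
proof -
  let ?g = "\<lambda>r. A r *v \<xi> r + f r"
  have h1: "(?g has_integral (\<xi> s1 - x)) {t..s1}" and h2: "(?g has_integral (\<xi> s2 - x)) {t..s2}"
    using \<xi> s unfolding is_traj_def by auto
  have "?g integrable_on {s1..s2}"
    by (rule integrable_subinterval_real[OF has_integral_integrable[OF h2]]) (use s in auto)
  then have "(?g has_integral (\<xi> s1 - x) + integral {s1..s2} ?g) {t..s2}"
    by (intro has_integral_combine[OF s(1,2) h1]) auto
  then have "integral {s1..s2} ?g = \<xi> s2 - \<xi> s1"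
    using has_integral_unique[OF h2] by (simp add: algebra_simps)
  then show ?thesis
    using \<open>?g integrable_on {s1..s2}\<close> by (metis has_integral_integral)
qed

lemma is_traj_forcing_integrable:
  assumes \<xi>: "is_traj T A f t x \<xi>" and s: "t \<le> s1" "s1 \<le> s2" "s2 \<le> T"
    and A: "continuous_on {t..T} A"
  shows "f integrable_on {s1..s2}"
proof -
  have "continuous_on {t..T} (\<lambda>r. A r *v \<xi> r)"
    using continuous_on_matrix_vector_mult[OF A is_traj_continuous_on[OF \<xi>]] s by auto
  then have "(\<lambda>r. A r *v \<xi> r) integrable_on {s1..s2}"
    by (rule integrable_on_subinterval[OF integrable_continuous_interval]) (use s in auto)
  then have "(\<lambda>r. (A r *v \<xi> r + f r) - A r *v \<xi> r) integrable_on {s1..s2}"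
    using is_traj_has_integral[OF \<xi> s] by (intro integrable_diff) auto
  then show ?thesis by simp
qed

lemma is_traj_norm_bound:
  assumes tT: "t \<le> T" and A: "continuous_on {t..T} A" and \<alpha>: "\<alpha> \<ge> 0"
    and A_bound: "\<And>s y. s \<in> {t..T} \<Longrightarrow> norm (A s *v y) \<le> \<alpha> * norm y"
    and f_bound: "\<And>s. s \<in> {t..T} \<Longrightarrow> norm (f s) \<le> F"
    and \<xi>: "is_traj T A f t x \<xi>" and s: "s \<in> {t..T}"
  shows "norm (\<xi> s) \<le> (norm x + F * (T - t)) * exp (\<alpha> * (T - t))"
proof -
  have F: "F \<ge> 0" using f_bound[of t] tT by (meson atLeastAtMost_iff norm_ge_zero order_refl order_trans)
  have c\<xi>: "continuous_on {t..T} \<xi>" by (rule is_traj_continuous_on[OF \<xi> tT])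
  have "norm (\<xi> s) \<le> (norm x + F * (T - t)) * exp (\<alpha> * (s - t))"
  proof (rule gronwall_inequality[OF tT _ \<alpha> _ s])
    show "continuous_on {t..T} (\<lambda>r. norm (\<xi> r))" using c\<xi> by (intro continuous_intros)
    fix s' assume s': "s' \<in> {t..T}"
    have iA: "(\<lambda>r. A r *v \<xi> r) integrable_on {t..s'}"
      by (rule integrable_on_subinterval[OF integrable_continuous_interval
          [OF continuous_on_matrix_vector_mult[OF A c\<xi>]]]) (use s' in auto)
    have iF: "f integrable_on {t..s'}"
      using is_traj_forcing_integrable[OF \<xi> _ _ _ A, of t s'] s' by auto
    have "\<xi> s' = x + (integral {t..s'} (\<lambda>r. A r *v \<xi> r) + integral {t..s'} f)"
      using is_traj_eq_integral[OF \<xi> s'] integral_add[OF iA iF] by simp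
    then have "norm (\<xi> s') \<le> norm x + (norm (integral {t..s'} (\<lambda>r. A r *v \<xi> r)) + norm (integral {t..s'} f))"
      using norm_triangle_ineq[of x] norm_triangle_ineq[of "integral {t..s'} (\<lambda>r. A r *v \<xi> r)"]
      by (smt (verit))
    moreover have "norm (integral {t..s'} (\<lambda>r. A r *v \<xi> r)) \<le> integral {t..s'} (\<lambda>r. \<alpha> * norm (\<xi> r))"
    proof (rule integral_norm_bound_integral[OF iA])
      show "(\<lambda>r. \<alpha> * norm (\<xi> r)) integrable_on {t..s'}"
        using c\<xi> s' by (intro integrable_on_subinterval[OF integrable_continuous_interval]
            continuous_intros) auto
    qed (use A_bound s' in auto)
    moreover have "norm (integral {t..s'} f) \<le> F * (s' - t)"
      using has_integral_bound_real[OF F finite.emptyI integrable_integral[OF iF]] f_bound s' by auto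
    moreover have "F * (s' - t) \<le> F * (T - t)" using F s' by (intro mult_left_mono) auto
    ultimately show "norm (\<xi> s') \<le> norm x + F * (T - t) + \<alpha> * integral {t..s'} (\<lambda>r. norm (\<xi> r))"
      by simp
  qed
  also have "\<dots> \<le> (norm x + F * (T - t)) * exp (\<alpha> * (T - t))"
  proof (rule mult_left_mono)
    show "exp (\<alpha> * (s - t)) \<le> exp (\<alpha> * (T - t))" using s \<alpha> by (simp add: mult_left_mono)
  qed (use F tT in simp)
  finally show ?thesis .
qed

lemma is_traj_unique:
  assumes tT: "t \<le> T" and A: "continuous_on {t..T} A"
    and \<xi>1: "is_traj T A f t x \<xi>1" and \<xi>2: "is_traj T A f t x \<xi>2"
    and s: "s \<in> {t..T}"
  shows "\<xi>1 s = \<xi>2 s"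
proof -
  obtain \<alpha> where \<alpha>: "\<alpha> \<ge> 0" "\<And>s y. s \<in> {t..T} \<Longrightarrow> norm (A s *v y) \<le> \<alpha> * norm y"
    using compact_continuous_matrix_bound[OF A] by auto
  define \<eta> where "\<eta> r = \<xi>1 r - \<xi>2 r" for r
  have \<eta>: "is_traj T A (\<lambda>_. 0) t 0 \<eta>"
    unfolding is_traj_def
  proof
    fix s' assume "s' \<in> {t..T}"
    then have "((\<lambda>r. (A r *v \<xi>1 r + f r) - (A r *v \<xi>2 r + f r)) has_integral (\<xi>1 s' - x) - (\<xi>2 s' - x)) {t..s'}"
      using \<xi>1 \<xi>2 unfolding is_traj_def by (intro has_integral_diff) auto
    then show "((\<lambda>r. A r *v \<eta> r + 0) has_integral \<eta> s' - 0) {t..s'}"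
      by (simp add: \<eta>_def matrix_vector_mult_diff_distrib)
  qed
  have "norm (\<eta> s) \<le> (norm (0::real^'a) + 0 * (T - t)) * exp (\<alpha> * (T - t))"
    by (rule is_traj_norm_bound[OF tT A \<alpha> _ \<eta> s]) auto
  then show ?thesis by (simp add: \<eta>_def)
qed

lemma is_traj_eq_if_forcing_ae_eq:
  assumes ts: "t \<le> s" and sT: "s \<le> T" and A: "continuous_on {t..T} A"
    and \<xi>1: "is_traj T A f1 t x \<xi>1" and \<xi>2: "is_traj T A f2 t x \<xi>2"
    and N: "negligible N" and eq: "\<And>r. r \<in> {t..s} \<Longrightarrow> r \<notin> N \<Longrightarrow> f1 r = f2 r"
  shows "\<xi>1 s = \<xi>2 s"
proof -
  have "is_traj s A f2 t x \<xi>1"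
    unfolding is_traj_def
  proof
    fix s' assume s': "s' \<in> {t..s}"
    have "((\<lambda>r. A r *v \<xi>1 r + f1 r) has_integral \<xi>1 s' - x) {t..s'}"
      using \<xi>1 s' sT unfolding is_traj_def by auto
    then show "((\<lambda>r. A r *v \<xi>1 r + f2 r) has_integral \<xi>1 s' - x) {t..s'}"
      by (rule has_integral_spike[OF N, rotated]) (use eq s' in auto)
  qed
  moreover have "continuous_on {t..s} A" using A sT by (auto intro: continuous_on_subset)
  ultimately show ?thesis
    using is_traj_unique[OF ts _ _ is_traj_restrict[OF \<xi>2 sT], of \<xi>1 s] ts by auto
qed

lemma has_integral_exp_series_term:
  fixes t s a C :: real
  assumes "t \<le> s"
  shows "((\<lambda>r. a * (C * (a * (r - t)) ^ k / fact k)) has_integral C * (a * (s - t)) ^ Suc k / fact (Suc k)) {t..s}"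
proof -
  have "((\<lambda>r. C / fact (Suc k) * (a * (r - t)) ^ Suc k) has_real_derivative
      C / fact (Suc k) * (real (Suc k) * (a * (r - t)) ^ k * a)) (at r within {t..s})" for r
  proof -
    have "((\<lambda>r. (a * (r - t)) ^ n) has_real_derivative real n * (a * (r - t)) ^ (n - 1) * a) (at r within {t..s})" for n
      by (auto intro!: derivative_eq_intros)
    from DERIV_cmult[OF this[of "Suc k"], of "C / fact (Suc k)"] show ?thesis by simp
  qed
  moreover have "C / fact (Suc k) * (real (Suc k) * (a * (r - t)) ^ k * a) = a * (C * (a * (r - t)) ^ k / fact k)" for r
    by (simp add: field_simps del: of_nat_Suc)
  moreover have "(\<lambda>r. C / fact (Suc k) * (a * (r - t)) ^ Suc k) = (\<lambda>r. C * (a * (r - t)) ^ Suc k / fact (Suc k))"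
    by auto
  ultimately have "((\<lambda>r. C * (a * (r - t)) ^ Suc k / fact (Suc k)) has_vector_derivative
      a * (C * (a * (r - t)) ^ k / fact k)) (at r within {t..s})" for r
    by (metis has_real_derivative_iff_has_vector_derivative)
  from fundamental_theorem_of_calculus[OF assms this]
  show ?thesis by simp
qed

lemma iterated_integral_bound:
  fixes A :: "real \<Rightarrow> real^'n^'n" and D :: "nat \<Rightarrow> real \<Rightarrow> real^'n"
  assumes A: "continuous_on {t..T} A" and \<alpha>: "\<alpha> \<ge> 0"
    and A_bound: "\<And>s y. s \<in> {t..T} \<Longrightarrow> norm (A s *v y) \<le> \<alpha> * norm y"
    and D_cont: "\<And>k. continuous_on {t..T} (D k)"
    and D0: "\<And>s. s \<in> {t..T} \<Longrightarrow> norm (D 0 s) \<le> C"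
    and D_Suc: "\<And>k s. s \<in> {t..T} \<Longrightarrow> D (Suc k) s = integral {t..s} (\<lambda>r. A r *v D k r)"
  shows "s \<in> {t..T} \<Longrightarrow> norm (D k s) \<le> C * (\<alpha> * (s - t)) ^ k / fact k"
proof (induction k arbitrary: s)
  case 0
  then show ?case using D0 by simp
next
  case (Suc k)
  have "norm (integral {t..s} (\<lambda>r. A r *v D k r)) \<le> integral {t..s} (\<lambda>r. \<alpha> * (C * (\<alpha> * (r - t)) ^ k / fact k))"
  proof (rule integral_norm_bound_integral)
    show "(\<lambda>r. A r *v D k r) integrable_on {t..s}"
      by (rule integrable_on_subinterval[OF integrable_continuous_interval
          [OF continuous_on_matrix_vector_mult[OF A D_cont]]]) (use Suc.prems in auto)
    show "(\<lambda>r. \<alpha> * (C * (\<alpha> * (r - t)) ^ k / fact k)) integrable_on {t..s}"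
      using has_integral_exp_series_term[of t s \<alpha> C k] Suc.prems by auto
    fix r assume r: "r \<in> {t..s}"
    then have "norm (A r *v D k r) \<le> \<alpha> * norm (D k r)" using A_bound Suc.prems by auto
    also have "\<dots> \<le> \<alpha> * (C * (\<alpha> * (r - t)) ^ k / fact k)"
      using Suc.IH[of r] r Suc.prems \<alpha> by (intro mult_left_mono) auto
    finally show "norm (A r *v D k r) \<le> \<alpha> * (C * (\<alpha> * (r - t)) ^ k / fact k)" .
  qed
  also have "\<dots> = C * (\<alpha> * (s - t)) ^ Suc k / fact (Suc k)"
    by (rule integral_unique[OF has_integral_exp_series_term]) (use Suc.prems in auto)
  finally show ?case using D_Suc[OF Suc.prems] by simp
qed

lemma is_traj_if_limit_of_picard_iterates:
  fixes A :: "real \<Rightarrow> real^'n^'n" and \<phi> :: "nat \<Rightarrow> real \<Rightarrow> real^'n"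
  assumes A: "continuous_on {t..T} A" and \<alpha>: "\<alpha> \<ge> 0"
    and A_bound: "\<And>s y. s \<in> {t..T} \<Longrightarrow> norm (A s *v y) \<le> \<alpha> * norm y"
    and f: "f integrable_on {t..T}"
    and \<phi>_cont: "\<And>k. continuous_on {t..T} (\<phi> k)"
    and \<phi>_Suc: "\<And>k s. s \<in> {t..T} \<Longrightarrow> \<phi> (Suc k) s = x + integral {t..s} (\<lambda>r. A r *v \<phi> k r + f r)"
    and \<phi>_lim: "\<And>s. s \<in> {t..T} \<Longrightarrow> (\<lambda>k. \<phi> k s) \<longlonglongrightarrow> \<xi> s"
    and \<phi>_bound: "\<And>k s. s \<in> {t..T} \<Longrightarrow> norm (\<phi> k s) \<le> M"
  shows "is_traj T A f t x \<xi>"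
  unfolding is_traj_def
proof
  fix s assume s: "s \<in> {t..T}"
  have A\<phi>: "(\<lambda>r. A r *v \<phi> k r) integrable_on {t..s}" for k
    by (rule integrable_on_subinterval[OF integrable_continuous_interval
        [OF continuous_on_matrix_vector_mult[OF A \<phi>_cont]]]) (use s in auto)
  have fs: "f integrable_on {t..s}"
    by (rule integrable_on_subinterval[OF f]) (use s in auto)
  have "((\<lambda>r. A r *v \<xi> r) has_integral (\<xi> s - x - integral {t..s} f)) {t..s}"
  proof (rule has_integral_dominated_convergence[where f="\<lambda>k r. A r *v \<phi> k r"
        and y="\<lambda>k. integral {t..s} (\<lambda>r. A r *v \<phi> k r)" and h="\<lambda>r. \<alpha> * M"])
    show "((\<lambda>r. A r *v \<phi> k r) has_integral integral {t..s} (\<lambda>r. A r *v \<phi> k r)) {t..s}" for k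
      using A\<phi> by auto
    show "\<forall>r\<in>{t..s}. norm (A r *v \<phi> k r) \<le> \<alpha> * M" for k
      using A_bound \<phi>_bound \<alpha> s by (meson atLeastAtMost_iff mult_left_mono order_trans)
    show "\<forall>r\<in>{t..s}. (\<lambda>k. A r *v \<phi> k r) \<longlonglongrightarrow> A r *v \<xi> r"
      using s \<phi>_lim by (auto intro!: bounded_linear.tendsto[OF matrix_vector_mul_bounded_linear])
    have "(\<lambda>k. \<phi> (Suc k) s - x - integral {t..s} f) \<longlonglongrightarrow> \<xi> s - x - integral {t..s} f"
      by (intro tendsto_intros LIMSEQ_Suc \<phi>_lim s)
    moreover have "\<phi> (Suc k) s - x - integral {t..s} f = integral {t..s} (\<lambda>r. A r *v \<phi> k r)" for k
      using \<phi>_Suc[OF s, of k] integral_add[OF A\<phi> fs] by simp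
    ultimately show "(\<lambda>k. integral {t..s} (\<lambda>r. A r *v \<phi> k r)) \<longlonglongrightarrow> \<xi> s - x - integral {t..s} f"
      by simp
  qed (rule integrable_on_const, simp)
  from has_integral_add[OF this integrable_integral[OF fs]]
  show "((\<lambda>r. A r *v \<xi> r + f r) has_integral \<xi> s - x) {t..s}" by simp
qed

lemma is_traj_if_picard_increments_summable:
  fixes A :: "real \<Rightarrow> real^'n^'n" and \<phi> :: "nat \<Rightarrow> real \<Rightarrow> real^'n"
  assumes A: "continuous_on {t..T} A" and \<alpha>: "\<alpha> \<ge> 0"
    and A_bound: "\<And>s y. s \<in> {t..T} \<Longrightarrow> norm (A s *v y) \<le> \<alpha> * norm y"
    and f: "f integrable_on {t..T}"
    and \<phi>_cont: "\<And>k. continuous_on {t..T} (\<phi> k)" and \<phi>0: "\<phi> 0 = (\<lambda>_. x)"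
    and \<phi>_Suc: "\<And>k s. \<phi> (Suc k) s = x + integral {t..s} (\<lambda>r. A r *v \<phi> k r + f r)"
    and M: "\<And>k s. s \<in> {t..T} \<Longrightarrow> norm (\<phi> (Suc k) s - \<phi> k s) \<le> M k" and M_nonneg: "\<And>k. M k \<ge> 0"
    and M_summable: "summable M"
  obtains \<xi> where "is_traj T A f t x \<xi>"
proof -
  define D where "D k s = \<phi> (Suc k) s - \<phi> k s" for k s
  have \<phi>_sum: "\<phi> k s = x + (\<Sum>i<k. D i s)" for k s
    unfolding D_def using sum_lessThan_telescope[of "\<lambda>i. \<phi> i s" k] by (simp add: \<phi>0)
  show ?thesis
  proof (rule that, rule is_traj_if_limit_of_picard_iterates[where \<phi>=\<phi> and x=x and M="norm x + suminf M",
        OF A \<alpha> A_bound f \<phi>_cont \<phi>_Suc])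
    have "uniform_limit {t..T} (\<lambda>k s. \<Sum>i<k. D i s) (\<lambda>s. \<Sum>i. D i s) sequentially"
      by (rule Weierstrass_m_test[OF M[folded D_def] M_summable])
    from tendsto_uniform_limitI[OF this]
    show "(\<lambda>k. \<phi> k s) \<longlonglongrightarrow> x + (\<Sum>i. D i s)" if "s \<in> {t..T}" for s
      unfolding \<phi>_sum using that by (intro tendsto_intros)
    show "norm (\<phi> k s) \<le> norm x + suminf M" if "s \<in> {t..T}" for k s
    proof -
      have "norm (\<Sum>i<k. D i s) \<le> (\<Sum>i<k. norm (D i s))" by (simp add: norm_sum)
      also have "\<dots> \<le> (\<Sum>i<k. M i)" by (intro sum_mono M[folded D_def] that)
      also have "\<dots> \<le> suminf M" by (rule sum_le_suminf[OF M_summable]) (use M_nonneg in auto)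
      finally show ?thesis
        unfolding \<phi>_sum by (meson add_left_mono norm_triangle_ineq order_trans)
    qed
  qed
qed

lemma is_traj_exists:
  fixes A :: "real \<Rightarrow> real^'n^'n" and f :: "real \<Rightarrow> real^'n"
  assumes tT: "t \<le> T" and A: "continuous_on {t..T} A" and f: "f integrable_on {t..T}"
  obtains \<xi> where "is_traj T A f t x \<xi>"
proof -
  obtain \<alpha> where \<alpha>: "\<alpha> \<ge> 0" "\<And>s y. s \<in> {t..T} \<Longrightarrow> norm (A s *v y) \<le> \<alpha> * norm y"
    using compact_continuous_matrix_bound[OF A] by auto
  define P where "P \<phi> = (\<lambda>s. x + integral {t..s} (\<lambda>r. A r *v \<phi> r + f r))" for \<phi> :: "real \<Rightarrow> real^'n"
  define \<phi> where "\<phi> k = (P ^^ k) (\<lambda>_. x)" for k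
  have \<phi>_Suc: "\<phi> (Suc k) = P (\<phi> k)" for k by (simp add: \<phi>_def)
  have A\<phi>: "(\<lambda>r. A r *v \<phi> k r + f r) integrable_on {t..s}"
    if "continuous_on {t..T} (\<phi> k)" "s \<in> {t..T}" for k s
    by (rule integrable_on_subinterval[OF integrable_add[OF integrable_continuous_interval
        [OF continuous_on_matrix_vector_mult[OF A that(1)]] f]]) (use that(2) in auto)
  have \<phi>_cont: "continuous_on {t..T} (\<phi> k)" for k
  proof (induction k)
    case (Suc k)
    then show ?case
      unfolding \<phi>_Suc P_def using A\<phi>[OF Suc, of T] tT
      by (intro continuous_intros indefinite_integral_continuous_1) auto
  qed (simp add: \<phi>_def)
  define D where "D k s = \<phi> (Suc k) s - \<phi> k s" for k s
  have D_cont: "continuous_on {t..T} (D k)" for k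
    unfolding D_def using \<phi>_cont by (intro continuous_intros)
  obtain C where "C > 0" "\<And>y. y \<in> D 0 ` {t..T} \<Longrightarrow> norm y \<le> C"
    using compact_imp_bounded[OF compact_continuous_image[OF D_cont[of 0] compact_Icc]]
    unfolding bounded_pos by blast
  then have C: "C \<ge> 0" "\<And>s. s \<in> {t..T} \<Longrightarrow> norm (D 0 s) \<le> C" by auto
  have D_Suc: "D (Suc k) s = integral {t..s} (\<lambda>r. A r *v D k r)" if "s \<in> {t..T}" for k s
  proof -
    have "D (Suc k) s = integral {t..s} (\<lambda>r. A r *v \<phi> (Suc k) r + f r) - integral {t..s} (\<lambda>r. A r *v \<phi> k r + f r)"
      by (simp add: D_def \<phi>_Suc[of "Suc k"] \<phi>_Suc[of k] P_def)
    also have "\<dots> = integral {t..s} (\<lambda>r. (A r *v \<phi> (Suc k) r + f r) - (A r *v \<phi> k r + f r))"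
      by (rule integral_diff[symmetric]) (intro A\<phi>[OF \<phi>_cont that])+
    finally show ?thesis
      by (simp add: D_def matrix_vector_mult_diff_distrib)
  qed
  define M where "M k = C * (\<alpha> * (T - t)) ^ k / fact k" for k
  have M: "norm (D k s) \<le> M k" if "s \<in> {t..T}" for k s
  proof -
    have "norm (D k s) \<le> C * (\<alpha> * (s - t)) ^ k / fact k"
      by (rule iterated_integral_bound[where D=D, OF A \<alpha> D_cont C(2) D_Suc that])
    also have "\<dots> \<le> M k"
      unfolding M_def using that \<alpha> C(1)
      by (intro divide_right_mono mult_left_mono power_mono) auto
    finally show ?thesis .
  qed
  have "M = (\<lambda>k. C * (inverse (fact k) * (\<alpha> * (T - t)) ^ k))"
    by (auto simp: M_def fun_eq_iff field_simps)
  then have M_summable: "summable M"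
    using summable_mult[OF summable_exp[of "\<alpha> * (T - t)"], of C] by simp
  have "M k \<ge> 0" for k unfolding M_def using C(1) \<alpha> tT by simp
  show ?thesis
  proof (rule is_traj_if_picard_increments_summable[where \<phi>=\<phi> and M=M and x=x, OF A \<alpha> f \<phi>_cont])
    show "\<phi> 0 = (\<lambda>_. x)" by (simp add: \<phi>_def)
    show "\<phi> (Suc k) s = x + integral {t..s} (\<lambda>r. A r *v \<phi> k r + f r)" for k s
      by (simp add: \<phi>_Suc P_def)
    show "norm (\<phi> (Suc k) s - \<phi> k s) \<le> M k" if "s \<in> {t..T}" for k s
      using M[OF that] by (simp add: D_def)
  qed (use \<open>\<And>k. M k \<ge> 0\<close> M_summable that in auto)
qed

lemma endpoint_eq:
  fixes A :: "real \<Rightarrow> real^'n^'n"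
  assumes tT: "t \<le> T" and A: "continuous_on {t..T} A"
    and \<xi>: "is_traj T A (\<lambda>r. B r *v u r + E r *v d r) t x \<xi>"
  shows "endpoint T A B E t x u d = \<xi> T"
  unfolding endpoint_def
proof (rule the_equality)
  show "\<exists>\<xi>'. is_traj T A (\<lambda>r. B r *v u r + E r *v d r) t x \<xi>' \<and> \<xi>' T = \<xi> T" using \<xi> by blast
next
  fix y assume "\<exists>\<xi>'. is_traj T A (\<lambda>r. B r *v u r + E r *v d r) t x \<xi>' \<and> \<xi>' T = y"
  then show "y = \<xi> T" using is_traj_unique[OF tT A _ \<xi>, of _ T] tT by auto
qed

section \<open>The adjoint pairing along a trajectory\<close>

context
  fixes A :: "real \<Rightarrow> real^'n^'n" and lam \<xi> f :: "real \<Rightarrow> real^'n" and q hq :: "real \<Rightarrow> real"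
    and t T F :: real and x :: "real^'n"
  assumes A: "continuous_on {t..T} A"
    and lam: "\<And>s. s \<in> {t..T} \<Longrightarrow> (lam has_vector_derivative - (transpose (A s) *v lam s)) (at s within {t..T})"
    and q: "\<And>s. s \<in> {t..T} \<Longrightarrow> (q has_real_derivative hq s) (at s within {t..T})"
    and \<xi>: "is_traj T A f t x \<xi>"
    and f_bound: "\<And>r. r \<in> {t..T} \<Longrightarrow> norm (f r) \<le> F"
begin

lemma adjoint_continuous_on: "continuous_on {t..T} lam"
  using lam by (meson continuous_on_eq_continuous_within has_vector_derivative_continuous)

lemma adjoint_integrand_integrable:
  assumes s: "t \<le> s1" "s1 \<le> s2" "s2 \<le> T"
  shows "(\<lambda>r. inner (lam r) (f r) + hq r) integrable_on {s1..s2}"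
proof (rule integrable_add)
  show "(\<lambda>r. inner (lam r) (f r)) integrable_on {s1..s2}"
  proof (rule inner_integrable_if_continuous_bounded[where F=F])
    show "continuous_on {s1..s2} lam"
      using continuous_on_subset[OF adjoint_continuous_on] s by auto
  qed (use is_traj_forcing_integrable[OF \<xi> s A] f_bound s in auto)
  have "(q has_vector_derivative hq r) (at r within {s1..s2})" if "r \<in> {s1..s2}" for r
    using q[of r, unfolded has_real_derivative_iff_has_vector_derivative] that s
    by (auto intro: has_vector_derivative_within_subset)
  then have "(hq has_integral q s2 - q s1) {s1..s2}"
    using s by (intro fundamental_theorem_of_calculus) auto
  then show "hq integrable_on {s1..s2}" by blast
qed

lemma adjoint_pairing_increment:
  assumes s: "t \<le> s1" "s1 \<le> s2" "s2 \<le> T"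
  shows "((\<lambda>r. inner (lam s1 - lam r) (A r *v \<xi> r + f r) + inner (lam r) (A r *v (\<xi> r - \<xi> s2))) has_integral
      (inner (lam s2) (\<xi> s2) + q s2) - (inner (lam s1) (\<xi> s1) + q s1)
        - integral {s1..s2} (\<lambda>r. inner (lam r) (f r) + hq r)) {s1..s2}"
proof -
  have sub: "{s1..s2} \<subseteq> {t..T}" using s by auto
  have "(lam has_vector_derivative - (transpose (A r) *v lam r)) (at r within {s1..s2})"
    and "(q has_vector_derivative hq r) (at r within {s1..s2})" if "r \<in> {s1..s2}" for r
    using lam[of r] q[of r, unfolded has_real_derivative_iff_has_vector_derivative] that sub
    by (auto intro: has_vector_derivative_within_subset)
  note derivs = this
  have "((\<lambda>r. - (transpose (A r) *v lam r)) has_integral lam s2 - lam s1) {s1..s2}"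
    using s derivs(1) by (intro fundamental_theorem_of_calculus) auto
  from has_integral_linear[OF this bounded_linear_inner_left[of "\<xi> s2"]]
  have h1: "((\<lambda>r. - inner (lam r) (A r *v \<xi> s2)) has_integral inner (lam s2 - lam s1) (\<xi> s2)) {s1..s2}"
    by (simp only: o_def inner_minus_left inner_transpose_matrix_vector)
  from has_integral_linear[OF is_traj_has_integral[OF \<xi> s] bounded_linear_inner_right[of "lam s1"]]
  have h2: "((\<lambda>r. inner (lam s1) (A r *v \<xi> r + f r)) has_integral inner (lam s1) (\<xi> s2 - \<xi> s1)) {s1..s2}"
    by (simp add: o_def)
  have h3: "(hq has_integral q s2 - q s1) {s1..s2}"
    using s derivs(2) by (intro fundamental_theorem_of_calculus) auto
  have "((\<lambda>r. - inner (lam r) (A r *v \<xi> s2) + inner (lam s1) (A r *v \<xi> r + f r) + hq r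
        - (inner (lam r) (f r) + hq r)) has_integral
      inner (lam s2 - lam s1) (\<xi> s2) + inner (lam s1) (\<xi> s2 - \<xi> s1) + (q s2 - q s1)
        - integral {s1..s2} (\<lambda>r. inner (lam r) (f r) + hq r)) {s1..s2}"
    by (intro has_integral_diff has_integral_add h1 h2 h3 integrable_integral adjoint_integrand_integrable s)
  then show ?thesis
    by (simp add: algebra_simps)
qed

lemma adjoint_increment_integrand_small:
  assumes tT: "t \<le> T" and \<epsilon>: "\<epsilon> > 0"
  obtains \<delta> where "\<delta> > 0" "\<And>s1 s2 r. t \<le> s1 \<Longrightarrow> s2 \<le> T \<Longrightarrow> s2 - s1 < \<delta> \<Longrightarrow> r \<in> {s1..s2} \<Longrightarrow>
    norm (inner (lam s1 - lam r) (A r *v \<xi> r + f r) + inner (lam r) (A r *v (\<xi> r - \<xi> s2))) \<le> \<epsilon>"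
proof -
  have c\<xi>: "continuous_on {t..T} \<xi>" by (rule is_traj_continuous_on[OF \<xi> tT])
  obtain \<alpha> where \<alpha>: "\<alpha> \<ge> 0" "\<And>s y. s \<in> {t..T} \<Longrightarrow> norm (A s *v y) \<le> \<alpha> * norm y"
    using compact_continuous_matrix_bound[OF A] by auto
  obtain L where "L > 0" "\<And>y. y \<in> lam ` {t..T} \<Longrightarrow> norm y \<le> L"
    using compact_imp_bounded[OF compact_continuous_image[OF adjoint_continuous_on compact_Icc]]
    unfolding bounded_pos by blast
  then have L: "L \<ge> 0" "\<And>r. r \<in> {t..T} \<Longrightarrow> norm (lam r) \<le> L" by auto
  obtain M where "M > 0" "\<And>y. y \<in> \<xi> ` {t..T} \<Longrightarrow> norm y \<le> M"
    using compact_imp_bounded[OF compact_continuous_image[OF c\<xi> compact_Icc]] unfolding bounded_pos by blast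
  then have M: "M \<ge> 0" "\<And>r. r \<in> {t..T} \<Longrightarrow> norm (\<xi> r) \<le> M" by auto
  have F: "F \<ge> 0" using f_bound[of t] tT by (meson atLeastAtMost_iff norm_ge_zero order_refl order_trans)
  define K where "K = \<alpha> * M + F + L * \<alpha> + 1"
  have K: "K > 0" using \<alpha> M L F by (simp add: K_def add_nonneg_pos)
  define \<eta> where "\<eta> = \<epsilon> / K"
  have \<eta>: "\<eta> > 0" using \<epsilon> K by (simp add: \<eta>_def)
  obtain d1 where d1: "d1 > 0"
    "\<And>r r'. r \<in> {t..T} \<Longrightarrow> r' \<in> {t..T} \<Longrightarrow> dist r' r < d1 \<Longrightarrow> dist (lam r') (lam r) < \<eta>"
    using compact_uniformly_continuous[OF adjoint_continuous_on compact_Icc] \<eta>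
    unfolding uniformly_continuous_on_def by metis
  obtain d2 where d2: "d2 > 0"
    "\<And>r r'. r \<in> {t..T} \<Longrightarrow> r' \<in> {t..T} \<Longrightarrow> dist r' r < d2 \<Longrightarrow> dist (\<xi> r') (\<xi> r) < \<eta>"
    using compact_uniformly_continuous[OF c\<xi> compact_Icc] \<eta> unfolding uniformly_continuous_on_def by metis
  show ?thesis
  proof (rule that[of "min d1 d2"])
    fix s1 s2 r assume s: "t \<le> s1" "s2 \<le> T" and close: "s2 - s1 < min d1 d2" and r: "r \<in> {s1..s2}"
    have rT: "r \<in> {t..T}" using r s by auto
    have dl: "norm (lam s1 - lam r) \<le> \<eta>" and dx: "norm (\<xi> r - \<xi> s2) \<le> \<eta>"
      using d1(2)[OF rT, of s1] d2(2)[of s2 r] r s close by (auto simp: dist_norm norm_minus_commute)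
    have "norm (A r *v \<xi> r + f r) \<le> \<alpha> * M + F"
      using norm_triangle_ineq[of "A r *v \<xi> r" "f r"] \<alpha>(2)[OF rT, of "\<xi> r"] M(2)[OF rT] f_bound[OF rT] \<alpha>(1)
      by (smt (verit) mult_left_mono)
    then have b1: "\<bar>inner (lam s1 - lam r) (A r *v \<xi> r + f r)\<bar> \<le> \<eta> * (\<alpha> * M + F)"
      using \<eta> by (intro order_trans[OF Cauchy_Schwarz_ineq2] mult_mono dl) auto
    have "norm (A r *v (\<xi> r - \<xi> s2)) \<le> \<alpha> * \<eta>"
      using \<alpha>(2)[OF rT, of "\<xi> r - \<xi> s2"] dx \<alpha>(1) by (meson mult_left_mono order_trans)
    then have b2: "\<bar>inner (lam r) (A r *v (\<xi> r - \<xi> s2))\<bar> \<le> L * (\<alpha> * \<eta>)"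
      by (intro order_trans[OF Cauchy_Schwarz_ineq2] mult_mono L(2)[OF rT]) (use L in auto)
    have "\<eta> * K = \<eta> * (\<alpha> * M + F) + L * (\<alpha> * \<eta>) + \<eta>" by (simp add: K_def algebra_simps)
    then have "norm (inner (lam s1 - lam r) (A r *v \<xi> r + f r) + inner (lam r) (A r *v (\<xi> r - \<xi> s2)))
        \<le> \<eta> * K"
      using b1 b2 \<eta> by simp
    then show "norm (inner (lam s1 - lam r) (A r *v \<xi> r + f r) + inner (lam r) (A r *v (\<xi> r - \<xi> s2)))
        \<le> \<epsilon>"
      using K by (simp add: \<eta>_def)
  qed (use d1 d2 in simp)
qed

lemma adjoint_pairing_has_integral:
  assumes tT: "t \<le> T"
  shows "((\<lambda>r. inner (lam r) (f r) + hq r) has_integral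
      (inner (lam T) (\<xi> T) + q T) - (inner (lam t) (\<xi> t) + q t)) {t..T}"
proof -
  define G where "G s = inner (lam s) (\<xi> s) + q s" for s
  define g where "g r = inner (lam r) (f r) + hq r" for r
  have g: "g integrable_on {s1..s2}" if "t \<le> s1" "s1 \<le> s2" "s2 \<le> T" for s1 s2
    unfolding g_def by (rule adjoint_integrand_integrable[OF that])
  define \<Phi> where "\<Phi> s = G s - integral {t..s} g" for s
  have "\<Phi> T = \<Phi> t"
  proof (rule eq_if_uniformly_small_increments[OF tT])
    fix \<epsilon> :: real assume "\<epsilon> > 0"
    from adjoint_increment_integrand_small[OF tT this] obtain \<delta> where \<delta>: "\<delta> > 0"
      "\<And>s1 s2 r. t \<le> s1 \<Longrightarrow> s2 \<le> T \<Longrightarrow> s2 - s1 < \<delta> \<Longrightarrow> r \<in> {s1..s2} \<Longrightarrow>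
        norm (inner (lam s1 - lam r) (A r *v \<xi> r + f r) + inner (lam r) (A r *v (\<xi> r - \<xi> s2))) \<le> \<epsilon>"
      by blast
    show "\<exists>\<delta>>0. \<forall>s1 s2. t \<le> s1 \<longrightarrow> s1 \<le> s2 \<longrightarrow> s2 \<le> T \<longrightarrow> s2 - s1 < \<delta>
        \<longrightarrow> norm (\<Phi> s2 - \<Phi> s1) \<le> \<epsilon> * (s2 - s1)"
    proof (intro exI[of _ \<delta>] conjI allI impI \<delta>(1))
      fix s1 s2 assume s: "t \<le> s1" "s1 \<le> s2" "s2 \<le> T" and close: "s2 - s1 < \<delta>"
      have "\<Phi> s2 - \<Phi> s1 = G s2 - G s1 - integral {s1..s2} g"
        using Henstock_Kurzweil_Integration.integral_combine[OF s(1,2) g[of t s2]] s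
        by (simp add: \<Phi>_def)
      then show "norm (\<Phi> s2 - \<Phi> s1) \<le> \<epsilon> * (s2 - s1)"
        using has_integral_bound_real[OF _ finite.emptyI adjoint_pairing_increment[OF s]] \<delta>(2)[OF s(1,3) close] \<open>\<epsilon> > 0\<close> s
        by (simp add: G_def g_def[abs_def])
    qed
  qed
  then have "integral {t..T} g = G T - G t" by (simp add: \<Phi>_def)
  with g[of t T] tT show ?thesis
    unfolding G_def g_def[abs_def] by (simp add: has_integral_integral)
qed
end

section \<open>Piecewise constant functions on a uniform grid\<close>

text \<open>Index of the cell of the uniform \<open>N\<close>-cell grid on \<open>[t, T]\<close> containing \<open>s\<close>;
  the right end point \<open>T\<close> is put into the last cell.\<close>

definition grid_index :: "real \<Rightarrow> real \<Rightarrow> nat \<Rightarrow> real \<Rightarrow> nat" where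
  "grid_index t T N s = min (N - 1) (nat \<lfloor>(s - t) / ((T - t) / real N)\<rfloor>)"

lemma measurable_grid_step_function:
  fixes c :: "nat \<Rightarrow> 'a::topological_space"
  shows "(\<lambda>s. c (grid_index t T N s)) \<in> borel_measurable (lebesgue_on S)"
proof -
  have "(\<lambda>s::real. (s - t) * inverse ((T - t) / real N)) \<in> borel \<rightarrow>\<^sub>M borel"
    by (intro borel_measurable_continuous_onI continuous_intros)
  then have "(\<lambda>s::real. (s - t) / ((T - t) / real N)) \<in> borel \<rightarrow>\<^sub>M borel"
    by (simp add: divide_inverse)
  from measurable_compose[OF this measurable_real_floor]
  have "(\<lambda>s. grid_index t T N s) \<in> borel \<rightarrow>\<^sub>M count_space UNIV"
    unfolding grid_index_def by (rule measurable_compose) simp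
  then have "(\<lambda>s. grid_index t T N s) \<in> lebesgue_on S \<rightarrow>\<^sub>M count_space UNIV"
    by (intro measurable_restrict_space1 measurable_completion) simp
  then show ?thesis
    by (rule measurable_compose) simp
qed

lemma grid_index_bounds:
  assumes tT: "t < T" and N: "N \<ge> 1" and s: "s \<in> {t..T}"
  shows "t + real (grid_index t T N s) * ((T - t) / real N) \<le> s"
    and "s \<le> t + real (Suc (grid_index t T N s)) * ((T - t) / real N)"
proof -
  define h where "h = (T - t) / real N"
  have h: "h > 0" using tT N by (simp add: h_def)
  define k where "k = nat \<lfloor>(s - t) / h\<rfloor>"
  have "real k = of_int \<lfloor>(s - t) / h\<rfloor>" using s h by (simp add: k_def)
  then have "real k \<le> (s - t) / h" "(s - t) / h < real k + 1" by linarith+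
  then have k: "real k * h \<le> s - t" "s - t < (real k + 1) * h"
    using h by (simp_all add: field_simps)
  have idx: "grid_index t T N s = min (N - 1) k" by (simp add: grid_index_def k_def h_def)
  have "real (grid_index t T N s) * h \<le> real k * h" unfolding idx using h by (intro mult_right_mono) auto
  then show "t + real (grid_index t T N s) * ((T - t) / real N) \<le> s" using k by (simp add: h_def)
  show "s \<le> t + real (Suc (grid_index t T N s)) * ((T - t) / real N)"
  proof (cases "k \<le> N - 1")
    case True
    then show ?thesis using idx k by (simp add: h_def algebra_simps)
  next
    case False
    then have "real (Suc (grid_index t T N s)) = real N" using idx N by simp
    then show ?thesis using s N by simp
  qed
qed

lemma grid_index_eqI:
  assumes tT: "t < T" and N: "N \<ge> 1" and j: "j < N"
    and lo: "t + real j * ((T - t) / real N) \<le> s" and hi: "s < t + real (Suc j) * ((T - t) / real N)"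
  shows "grid_index t T N s = j"
proof -
  define h where "h = (T - t) / real N"
  have h: "h > 0" using tT N by (simp add: h_def)
  have "real j \<le> (s - t) / h" "(s - t) / h < real j + 1"
    using lo hi h by (simp_all add: h_def[symmetric] field_simps)
  then have "\<lfloor>(s - t) / h\<rfloor> = int j" by (simp add: floor_eq_iff)
  then show ?thesis using j by (simp add: grid_index_def h_def[symmetric])
qed

lemma measurable_near_argmax:
  fixes w :: "real \<Rightarrow> 'a::euclidean_space" and D :: "'a set"
  assumes tT: "t \<le> T" and w: "continuous_on {t..T} w" and D: "compact D" "D \<noteq> {}" and \<eta>: "\<eta> > 0"
  obtains d where "d \<in> borel_measurable (lebesgue_on {t..T})" "\<And>r. r \<in> {t..T} \<Longrightarrow> d r \<in> D"
    "\<And>r d'. r \<in> {t..T} \<Longrightarrow> d' \<in> D \<Longrightarrow> inner (w r) d' \<le> inner (w r) (d r) + \<eta>"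
proof -
  define am where "am s = (SOME d. d \<in> D \<and> (\<forall>d'\<in>D. inner (w s) d' \<le> inner (w s) d))" for s
  have am: "am s \<in> D" "\<And>d'. d' \<in> D \<Longrightarrow> inner (w s) d' \<le> inner (w s) (am s)" for s
  proof -
    have "\<exists>d. d \<in> D \<and> (\<forall>d'\<in>D. inner (w s) d' \<le> inner (w s) d)"
      using continuous_attains_sup[OF D, of "\<lambda>d. inner (w s) d"] by (simp add: continuous_on_inner) blast
    from someI_ex[OF this] show "am s \<in> D" "\<And>d'. d' \<in> D \<Longrightarrow> inner (w s) d' \<le> inner (w s) (am s)"
      unfolding am_def by blast+
  qed
  obtain R where R: "R > 0" "\<And>d. d \<in> D \<Longrightarrow> norm d \<le> R"
    using compact_imp_bounded[OF D(1)] unfolding bounded_pos by blast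
  \<comment> \<open>Freezing \<open>w\<close> at the left end of a short grid cell changes \<open>inner (w r) d\<close> by at most \<open>\<eta> / 2\<close>.\<close>
  have close: "inner (w r) d' \<le> inner (w r) (am s) + \<eta>"
    if "r \<in> {t..T}" "s \<in> {t..T}" "norm (w r - w s) \<le> \<eta> / (2 * R)" "d' \<in> D" for r s d'
  proof -
    have "\<bar>inner (w r) d - inner (w s) d\<bar> \<le> \<eta> / 2" if "d \<in> D" for d
    proof -
      have "\<bar>inner (w r - w s) d\<bar> \<le> \<eta> / (2 * R) * R"
        using that R \<open>norm (w r - w s) \<le> _\<close> \<eta> by (intro order_trans[OF Cauchy_Schwarz_ineq2] mult_mono) auto
      then show ?thesis using R(1) by (simp add: inner_diff_left)
    qed
    from this[OF \<open>d' \<in> D\<close>] this[OF am(1)[of s]] am(2)[OF \<open>d' \<in> D\<close>, of s]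
    show ?thesis unfolding abs_le_iff by linarith
  qed
  obtain \<delta> where \<delta>: "\<delta> > 0" "\<And>r s. r \<in> {t..T} \<Longrightarrow> s \<in> {t..T} \<Longrightarrow> dist s r < \<delta> \<Longrightarrow> dist (w s) (w r) < \<eta> / (2 * R)"
    using compact_uniformly_continuous[OF w compact_Icc] \<eta> R(1) unfolding uniformly_continuous_on_def
    by (metis divide_pos_pos mult_pos_pos zero_less_numeral)
  show ?thesis
  proof (cases "t = T")
    case True
    show ?thesis
    proof (rule that[of "\<lambda>_. am t"])
      fix r d' assume "r \<in> {t..T}" "d' \<in> D"
      then show "inner (w r) d' \<le> inner (w r) (am t) + \<eta>" using am(2)[of d' t] True \<eta> by auto
    qed (use am in auto)
  next
    case False
    then have tT': "t < T" using tT by simp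
    obtain N :: nat where N: "real N > max 1 ((T - t) / \<delta>)" using reals_Archimedean2 by blast
    then have N1: "N \<ge> 1" by simp
    define h where "h = (T - t) / real N"
    have h: "h > 0" "h < \<delta>" using N tT' \<delta>(1) by (auto simp: h_def field_simps)
    define s where "s r = t + real (grid_index t T N r) * h" for r
    show ?thesis
    proof (rule that[of "\<lambda>r. am (s r)"])
      show "(\<lambda>r. am (s r)) \<in> borel_measurable (lebesgue_on {t..T})"
        unfolding s_def by (rule measurable_grid_step_function)
      show "am (s r) \<in> D" for r by (rule am(1))
      fix r d' assume r: "r \<in> {t..T}" and d': "d' \<in> D"
      have "s r \<le> r" "r \<le> s r + h"
        using grid_index_bounds[OF tT' N1 r] by (auto simp: s_def h_def algebra_simps)
      moreover have "t \<le> s r" using h by (simp add: s_def)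
      ultimately have "s r \<in> {t..T}" "dist (w r) (w (s r)) < \<eta> / (2 * R)"
        using r h \<delta>(2)[of "s r" r] by (auto simp: dist_real_def)
      then show "inner (w r) d' \<le> inner (w r) (am (s r)) + \<eta>"
        using close[OF r _ _ d'] by (simp add: dist_norm)
    qed
  qed
qed

definition grid_control :: "real \<Rightarrow> real \<Rightarrow> nat \<Rightarrow> (nat \<Rightarrow> 'a) \<Rightarrow> real \<Rightarrow> 'a" where
  "grid_control t T N c r = c (grid_index t T N r)"

lemma grid_control_in_ctrl_set:
  "(\<And>i. c i \<in> S) \<Longrightarrow> grid_control t T N c \<in> ctrl_set t T S"
  unfolding ctrl_set_def grid_control_def using measurable_grid_step_function[of c] by auto

lemma grid_control_cell:
  assumes "t < T" "N \<ge> 1" "j < N"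
    and "t + real j * ((T - t) / real N) \<le> r" "r < t + real (Suc j) * ((T - t) / real N)"
  shows "grid_control t T N c r = c j"
  using grid_index_eqI[OF assms] by (simp add: grid_control_def)

lemma grid_control_eq_before:
  assumes tT: "t < T" and N: "N \<ge> 1" and r: "r \<in> {t..T}" "r < t + real j * ((T - t) / real N)"
    and c: "\<And>i. i < j \<Longrightarrow> c i = c' i"
  shows "grid_control t T N c r = grid_control t T N c' r"
proof -
  define h where "h = (T - t) / real N"
  have "h > 0" using tT N by (simp add: h_def)
  have "real (grid_index t T N r) * h < real j * h"
    using grid_index_bounds(1)[OF tT N r(1)] r(2) unfolding h_def by linarith
  then have "grid_index t T N r < j" using mult_less_cancel_right_pos[OF \<open>h > 0\<close>] by simp
  then show ?thesis using c by (simp add: grid_control_def)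
qed

lemma grid_oscillation_le:
  fixes B :: "real \<Rightarrow> 'a::real_normed_vector"
  assumes tT: "t \<le> T" and B: "continuous_on {t..T} B" and \<tau>: "\<tau> > 0"
  obtains \<delta> where "\<delta> > 0"
    "\<And>N j r. (T - t) / real N < \<delta> \<Longrightarrow> j < N \<Longrightarrow>
      r \<in> {t + real j * ((T - t) / real N)..t + real (Suc j) * ((T - t) / real N)} \<Longrightarrow>
      norm (B r - B (t + real j * ((T - t) / real N))) \<le> \<tau>"
proof -
  obtain \<delta> where \<delta>: "\<delta> > 0" "\<And>r r'. r \<in> {t..T} \<Longrightarrow> r' \<in> {t..T} \<Longrightarrow> dist r' r < \<delta> \<Longrightarrow> dist (B r') (B r) < \<tau>"
    using compact_uniformly_continuous[OF B compact_Icc] \<tau> unfolding uniformly_continuous_on_def by metis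
  show ?thesis
  proof (rule that[OF \<delta>(1)])
    fix N j r assume h\<delta>: "(T - t) / real N < \<delta>" and j: "j < N"
      and "r \<in> {t + real j * ((T - t) / real N)..t + real (Suc j) * ((T - t) / real N)}"
    define h where "h = (T - t) / real N"
    have h0: "h \<ge> 0" and Nh: "real N * h = T - t" using tT j by (auto simp: h_def)
    have r: "t + real j * h \<le> r" "r \<le> t + real j * h + h"
      using \<open>r \<in> _\<close> unfolding h_def[symmetric] by (auto simp: algebra_simps)
    have "real (Suc j) * h \<le> real N * h" using j h0 by (intro mult_right_mono) auto
    moreover have "0 \<le> real j * h" using h0 by simp
    moreover have "real (Suc j) * h = real j * h + h" by (simp add: algebra_simps)
    ultimately have "t + real j * h \<in> {t..T}" "r \<in> {t..T}"
      using r h0 Nh by (simp_all, linarith+)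
    moreover have "dist r (t + real j * h) < \<delta>" using r h\<delta> by (simp add: dist_real_def h_def)
    ultimately have "dist (B r) (B (t + real j * h)) < \<tau>" by (rule \<delta>(2))
    then show "norm (B r - B (t + real j * ((T - t) / real N))) \<le> \<tau>"
      unfolding h_def[symmetric] by (simp add: dist_norm)
  qed
qed

section \<open>The linear differential game\<close>

lemma ctrl_set_const: "c \<in> S \<Longrightarrow> (\<lambda>_. c) \<in> ctrl_set t T S"
  by (simp add: ctrl_set_def)

lemma nonanticip_open_loop: "d \<in> ctrl_set t T D \<Longrightarrow> (\<lambda>_. d) \<in> nonanticip t T U D"
  by (simp add: nonanticip_def)

lemma Wset_decompose:
  assumes "\<omega> \<in> Wset B E U D s" "d \<in> D"
  obtains u where "u \<in> U" "\<omega> = B s *v u + E s *v d"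
proof -
  have "\<omega> + - (E s *v d) \<in> (\<lambda>u. B s *v u) ` U"
    using assms by (auto simp: Wset_def mdiff_def msum_def)
  then show ?thesis using that by (auto simp: algebra_simps)
qed

lemma hamil_integrand_bounded:
  fixes M :: "real^'m^'n" and N :: "real^'l^'n"
  assumes "compact U" "compact D"
  obtains K where "\<And>u d. u \<in> U \<Longrightarrow> d \<in> D \<Longrightarrow> \<bar>inner lam (M *v u + N *v d)\<bar> \<le> K"
proof -
  have "continuous_on (U \<times> D) (\<lambda>p. inner (transpose M *v lam) (fst p) + inner (transpose N *v lam) (snd p))"
    by (intro continuous_intros)
  from compact_imp_bounded[OF compact_continuous_image[OF this compact_Times[OF assms]]]
  obtain K where "\<And>u d. u \<in> U \<Longrightarrow> d \<in> D \<Longrightarrow>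
      norm (inner (transpose M *v lam) u + inner (transpose N *v lam) d) \<le> K"
    unfolding bounded_iff by fastforce
  from this[unfolded inner_transpose_matrix_vector] show ?thesis
    using that[of K] by (simp add: inner_add_right)
qed

lemma hamil_ge:
  assumes U: "compact U" and D: "compact D" "D \<noteq> {}" and u: "u \<in> U" and d: "d \<in> D"
    and near_min: "\<And>d'. d' \<in> D \<Longrightarrow> inner (- lam) (E s *v d) \<le> inner (- lam) (E s *v d') + \<eta>"
  shows "inner (- lam) (B s *v u + E s *v d) - \<eta> \<le> hamil B E U D lam s"
proof -
  obtain K where K: "\<And>u d. u \<in> U \<Longrightarrow> d \<in> D \<Longrightarrow> \<bar>inner (- lam) (B s *v u + E s *v d)\<bar> \<le> K"
    using hamil_integrand_bounded[OF U D(1)] by blast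
  have bdd: "bdd_below ((\<lambda>d. inner (- lam) (B s *v u' + E s *v d)) ` D)" if "u' \<in> U" for u'
    using K[OF that] by (intro bdd_belowI2[where m="- K"]) (simp add: abs_le_iff)
  have "bdd_above ((\<lambda>u'. INF d\<in>D. inner (- lam) (B s *v u' + E s *v d)) ` U)"
  proof (intro bdd_aboveI2[where M=K])
    fix u' assume "u' \<in> U"
    then show "(INF d\<in>D. inner (- lam) (B s *v u' + E s *v d)) \<le> K"
      using cINF_lower2[OF bdd d] K[OF _ d] by (simp add: abs_le_iff)
  qed
  moreover have "inner (- lam) (B s *v u + E s *v d) - \<eta> \<le> (INF d\<in>D. inner (- lam) (B s *v u + E s *v d))"
  proof (rule cINF_greatest[OF D(2)])
    fix d' assume "d' \<in> D"
    from near_min[OF this]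
    show "inner (- lam) (B s *v u + E s *v d) - \<eta> \<le> inner (- lam) (B s *v u + E s *v d')"
      by (simp add: inner_add_right)
  qed
  ultimately show ?thesis
    unfolding hamil_def using cSUP_upper[OF u] order_trans by blast
qed

lemma hamil_le:
  assumes U: "compact U" "U \<noteq> {}" and D: "compact D"
    and c: "\<And>u. u \<in> U \<Longrightarrow> \<exists>d\<in>D. inner (- lam) (B s *v u + E s *v d) \<le> c"
  shows "hamil B E U D lam s \<le> c"
  unfolding hamil_def
proof (rule cSUP_least[OF U(2)])
  fix u assume u: "u \<in> U"
  obtain K where K: "\<And>u d. u \<in> U \<Longrightarrow> d \<in> D \<Longrightarrow> \<bar>inner (- lam) (B s *v u + E s *v d)\<bar> \<le> K"
    using hamil_integrand_bounded[OF U(1) D] by blast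
  have bdd: "bdd_below ((\<lambda>d. inner (- lam) (B s *v u + E s *v d)) ` D)"
    using K[OF u] by (intro bdd_belowI2[where m="- K"]) (simp add: abs_le_iff)
  obtain d where "d \<in> D" "inner (- lam) (B s *v u + E s *v d) \<le> c" using c[OF u] by blast
  then show "(INF d\<in>D. inner (- lam) (B s *v u + E s *v d)) \<le> c"
    by (intro cINF_lower2[OF bdd])
qed

lemma linear_argmin_selection:
  fixes B :: "real \<Rightarrow> real^'m^'n"
  assumes "compact U" "U \<noteq> {}"
  obtains am where "\<And>y s. am y s \<in> U" "\<And>y s v. v \<in> U \<Longrightarrow> inner y (B s *v am y s) \<le> inner y (B s *v v)"
proof -
  define am where "am y s = (SOME u. u \<in> U \<and> (\<forall>v\<in>U. inner y (B s *v u) \<le> inner y (B s *v v)))" for y s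
  have "am y s \<in> U \<and> (\<forall>v\<in>U. inner y (B s *v am y s) \<le> inner y (B s *v v))" for y s
  proof -
    have "\<exists>u\<in>U. \<forall>v\<in>U. inner (transpose (B s) *v y) u \<le> inner (transpose (B s) *v y) v"
      by (rule continuous_attains_inf[OF assms]) (intro continuous_intros)
    then have "\<exists>u. u \<in> U \<and> (\<forall>v\<in>U. inner y (B s *v u) \<le> inner y (B s *v v))"
      unfolding inner_transpose_matrix_vector by blast
    then show ?thesis unfolding am_def by (rule someI_ex)
  qed
  then show ?thesis by (intro that[of am]) auto
qed

locale linear_game =
  fixes T :: real and A :: "real \<Rightarrow> real^'n^'n" and B :: "real \<Rightarrow> real^'m^'n" and E :: "real \<Rightarrow> real^'l^'n"
    and U :: "(real^'m) set" and D :: "(real^'l) set"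
  assumes A_cont: "continuous_on {0..T} A" and B_cont: "continuous_on {0..T} B"
    and E_cont: "continuous_on {0..T} E"
    and U_compact: "compact U" and U_nonempty: "U \<noteq> {}"
    and D_compact: "compact D" and D_nonempty: "D \<noteq> {}"
begin

lemma continuous_on_coefficients:
  assumes "t \<in> {0..T}"
  shows "continuous_on {t..T} A" "continuous_on {t..T} B" "continuous_on {t..T} E"
proof -
  have "{t..T} \<subseteq> {0..T}" using assms by auto
  then show "continuous_on {t..T} A" "continuous_on {t..T} B" "continuous_on {t..T} E"
    by (rule continuous_on_subset[OF A_cont], rule continuous_on_subset[OF B_cont],
        rule continuous_on_subset[OF E_cont])
qed

lemma forcing_bound:
  obtains F where "F \<ge> 0" "\<And>s u d. s \<in> {0..T} \<Longrightarrow> u \<in> U \<Longrightarrow> d \<in> D \<Longrightarrow> norm (B s *v u + E s *v d) \<le> F"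
proof -
  have "continuous_on ({0..T} \<times> (U \<times> D)) (\<lambda>p. B (fst p) *v fst (snd p) + E (fst p) *v snd (snd p))"
    by (intro continuous_intros continuous_on_matrix_vector_mult continuous_on_compose2[OF B_cont]
        continuous_on_compose2[OF E_cont]) auto
  from compact_imp_bounded[OF compact_continuous_image[OF this
      compact_Times[OF compact_Icc compact_Times[OF U_compact D_compact]]]]
  obtain F where "F > 0" "\<And>s u d. s \<in> {0..T} \<Longrightarrow> u \<in> U \<Longrightarrow> d \<in> D \<Longrightarrow> norm (B s *v u + E s *v d) \<le> F"
    unfolding bounded_pos by fastforce
  then show ?thesis using that[of F] by auto
qed

lemma forcing_integrable:
  assumes t: "t \<in> {0..T}" and u: "u \<in> ctrl_set t T U" and d: "d \<in> ctrl_set t T D"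
  shows "(\<lambda>r. B r *v u r + E r *v d r) integrable_on {t..T}"
proof -
  obtain F where "F \<ge> 0"
    and F: "\<And>s u d. s \<in> {0..T} \<Longrightarrow> u \<in> U \<Longrightarrow> d \<in> D \<Longrightarrow> norm (B s *v u + E s *v d) \<le> F"
    using forcing_bound by metis
  have "(\<lambda>r. B r *v u r) \<in> borel_measurable (lebesgue_on {t..T})"
    by (rule measurable_matrix_vector_mult[OF continuous_on_coefficients(2)[OF t]])
      (use u in \<open>simp_all add: ctrl_set_def\<close>)
  moreover have "(\<lambda>r. E r *v d r) \<in> borel_measurable (lebesgue_on {t..T})"
    by (rule measurable_matrix_vector_mult[OF continuous_on_coefficients(3)[OF t]])
      (use d in \<open>simp_all add: ctrl_set_def\<close>)
  ultimately have "(\<lambda>r. B r *v u r + E r *v d r) \<in> borel_measurable (lebesgue_on {t..T})"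
    by (rule borel_measurable_add)
  then show ?thesis
  proof (rule integrable_on_if_bounded_measurable)
    fix s assume "s \<in> {t..T}"
    then show "norm (B s *v u s + E s *v d s) \<le> F"
      using F[of s "u s" "d s"] u d t by (simp add: ctrl_set_def)
  qed
qed

lemma endpoint_traj:
  assumes t: "t \<in> {0..T}" and u: "u \<in> ctrl_set t T U" and d: "d \<in> ctrl_set t T D"
  obtains \<xi> where "is_traj T A (\<lambda>r. B r *v u r + E r *v d r) t x \<xi>" "endpoint T A B E t x u d = \<xi> T"
proof -
  have tT: "t \<le> T" using t by auto
  obtain \<xi> where "is_traj T A (\<lambda>r. B r *v u r + E r *v d r) t x \<xi>"
    using is_traj_exists[OF tT continuous_on_coefficients(1)[OF t] forcing_integrable[OF t u d]] by blast
  then show ?thesis using that endpoint_eq[OF tT continuous_on_coefficients(1)[OF t]] by blast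
qed

lemma response_bounded:
  assumes t: "t \<in> {0..T}"
  obtains M where "\<And>u d \<xi> r. u \<in> ctrl_set t T U \<Longrightarrow> d \<in> ctrl_set t T D \<Longrightarrow>
     is_traj T A (\<lambda>r. B r *v u r + E r *v d r) t x \<xi> \<Longrightarrow> r \<in> {t..T} \<Longrightarrow> norm (\<xi> r) \<le> M"
proof -
  obtain F where F: "\<And>s u d. s \<in> {0..T} \<Longrightarrow> u \<in> U \<Longrightarrow> d \<in> D \<Longrightarrow> norm (B s *v u + E s *v d) \<le> F"
    using forcing_bound by metis
  obtain \<alpha> where \<alpha>: "\<alpha> \<ge> 0" "\<And>s y. s \<in> {t..T} \<Longrightarrow> norm (A s *v y) \<le> \<alpha> * norm y"
    using compact_continuous_matrix_bound[OF continuous_on_coefficients(1)[OF t]] by auto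
  show ?thesis
  proof (rule that)
    fix u d \<xi> r assume u: "u \<in> ctrl_set t T U" and d: "d \<in> ctrl_set t T D"
      and \<xi>: "is_traj T A (\<lambda>r. B r *v u r + E r *v d r) t x \<xi>" and r: "r \<in> {t..T}"
    have "norm (B s *v u s + E s *v d s) \<le> F" if "s \<in> {t..T}" for s
      using F[of s "u s" "d s"] u d t that by (simp add: ctrl_set_def)
    from is_traj_norm_bound[OF _ continuous_on_coefficients(1)[OF t] \<alpha> this \<xi> r] t
    show "norm (\<xi> r) \<le> (norm x + F * (T - t)) * exp (\<alpha> * (T - t))" by simp
  qed
qed

lemma payoff_bounded:
  fixes g :: "real^'n \<Rightarrow> real"
  assumes g: "L-lipschitz_on UNIV g" and t: "t \<in> {0..T}"
  obtains K where "\<And>u d. u \<in> ctrl_set t T U \<Longrightarrow> d \<in> ctrl_set t T D \<Longrightarrow>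
     \<bar>g (endpoint T A B E t x u d)\<bar> \<le> K"
proof -
  obtain M where M: "\<And>u d \<xi> r. u \<in> ctrl_set t T U \<Longrightarrow> d \<in> ctrl_set t T D \<Longrightarrow>
      is_traj T A (\<lambda>r. B r *v u r + E r *v d r) t x \<xi> \<Longrightarrow> r \<in> {t..T} \<Longrightarrow> norm (\<xi> r) \<le> M"
    using response_bounded[OF t, where x=x] by blast
  have L: "L \<ge> 0" using g by (simp add: lipschitz_on_def)
  show ?thesis
  proof (rule that)
    fix u d assume ud: "u \<in> ctrl_set t T U" "d \<in> ctrl_set t T D"
    obtain \<xi> where \<xi>: "is_traj T A (\<lambda>r. B r *v u r + E r *v d r) t x \<xi>"
      and endpoint: "endpoint T A B E t x u d = \<xi> T"
      by (rule endpoint_traj[OF t ud])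
    have "\<bar>g (\<xi> T)\<bar> \<le> \<bar>g 0\<bar> + L * norm (\<xi> T)"
      using lipschitz_onD[OF g, of "\<xi> T" 0] by (simp add: dist_real_def)
    also have "\<dots> \<le> \<bar>g 0\<bar> + L * M"
      using M[OF ud \<xi>, of T] t L by (intro add_left_mono mult_left_mono) auto
    finally show "\<bar>g (endpoint T A B E t x u d)\<bar> \<le> \<bar>g 0\<bar> + L * M" by (simp add: endpoint)
  qed
qed

lemma value_fn_ge:
  fixes g :: "real^'n \<Rightarrow> real"
  assumes g: "L-lipschitz_on UNIV g" and t: "t \<in> {0..T}" and \<delta>: "\<delta> \<in> nonanticip t T U D"
    and c: "\<And>u. u \<in> ctrl_set t T U \<Longrightarrow> c \<le> g (endpoint T A B E t x u (\<delta> u))"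
  shows "c \<le> value_fn T A B E U D g t x"
proof -
  obtain K where K: "\<And>u d. u \<in> ctrl_set t T U \<Longrightarrow> d \<in> ctrl_set t T D \<Longrightarrow>
      \<bar>g (endpoint T A B E t x u d)\<bar> \<le> K"
    using payoff_bounded[OF g t] by metis
  obtain u0 where u0: "u0 \<in> U" using U_nonempty by blast
  have u0c: "(\<lambda>_. u0) \<in> ctrl_set t T U" by (rule ctrl_set_const[OF u0])
  have bound: "\<bar>g (endpoint T A B E t x u (\<delta>' u))\<bar> \<le> K" if "\<delta>' \<in> nonanticip t T U D" "u \<in> ctrl_set t T U" for \<delta>' u
    using K[OF that(2)] that by (simp add: nonanticip_def)
  have bdd: "bdd_below ((\<lambda>u. g (endpoint T A B E t x u (\<delta>' u))) ` ctrl_set t T U)"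
    if "\<delta>' \<in> nonanticip t T U D" for \<delta>'
  proof (rule bdd_belowI2[where m="- K"])
    fix u assume "u \<in> ctrl_set t T U"
    from bound[OF that this] show "- K \<le> g (endpoint T A B E t x u (\<delta>' u))" by linarith
  qed
  have "bdd_above ((\<lambda>\<delta>'. INF u\<in>ctrl_set t T U. g (endpoint T A B E t x u (\<delta>' u))) ` nonanticip t T U D)"
  proof (rule bdd_aboveI2[where M=K])
    fix \<delta>' assume "\<delta>' \<in> nonanticip t T U D"
    then show "(INF u\<in>ctrl_set t T U. g (endpoint T A B E t x u (\<delta>' u))) \<le> K"
      using cINF_lower[OF bdd u0c] bound[OF _ u0c] by fastforce
  qed
  moreover have "c \<le> (INF u\<in>ctrl_set t T U. g (endpoint T A B E t x u (\<delta> u)))"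
    using c u0c by (intro cINF_greatest) auto
  ultimately show ?thesis
    unfolding value_fn_def using cSUP_upper[OF \<delta>] order_trans by blast
qed

lemma value_fn_le:
  fixes g :: "real^'n \<Rightarrow> real"
  assumes g: "L-lipschitz_on UNIV g" and t: "t \<in> {0..T}"
    and c: "\<And>\<delta> \<eta>. \<delta> \<in> nonanticip t T U D \<Longrightarrow> \<eta> > 0 \<Longrightarrow>
      \<exists>u\<in>ctrl_set t T U. g (endpoint T A B E t x u (\<delta> u)) \<le> c + \<eta>"
  shows "value_fn T A B E U D g t x \<le> c"
  unfolding value_fn_def
proof (rule cSUP_least)
  obtain d0 where "d0 \<in> D" using D_nonempty by blast
  then show "nonanticip t T U D \<noteq> {}"
    using nonanticip_open_loop[OF ctrl_set_const] by blast
  fix \<delta> assume \<delta>: "\<delta> \<in> nonanticip t T U D"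
  obtain K where K: "\<And>u d. u \<in> ctrl_set t T U \<Longrightarrow> d \<in> ctrl_set t T D \<Longrightarrow>
      \<bar>g (endpoint T A B E t x u d)\<bar> \<le> K"
    using payoff_bounded[OF g t] by metis
  have bdd: "bdd_below ((\<lambda>u. g (endpoint T A B E t x u (\<delta> u))) ` ctrl_set t T U)"
  proof (rule bdd_belowI2[where m="- K"])
    fix u assume "u \<in> ctrl_set t T U"
    with K[OF this, of "\<delta> u"] \<delta> show "- K \<le> g (endpoint T A B E t x u (\<delta> u))"
      by (auto simp: nonanticip_def)
  qed
  show "(INF u\<in>ctrl_set t T U. g (endpoint T A B E t x u (\<delta> u))) \<le> c"
  proof (rule field_le_epsilon)
    fix \<eta> :: real assume "\<eta> > 0"
    then obtain u where "u \<in> ctrl_set t T U" "g (endpoint T A B E t x u (\<delta> u)) \<le> c + \<eta>"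
      using c[OF \<delta>] by blast
    then show "(INF u\<in>ctrl_set t T U. g (endpoint T A B E t x u (\<delta> u))) \<le> c + \<eta>"
      by (intro cINF_lower2[OF bdd])
  qed
qed

end

section \<open>Lower bounds from the adjoint system\<close>

context linear_game
begin

lemma adjoint_pairing_along_response:
  fixes lam :: "real \<Rightarrow> real^'n" and q hq :: "real \<Rightarrow> real"
  assumes t: "t \<in> {0..T}"
    and lam: "\<And>s. s \<in> {0..T} \<Longrightarrow> (lam has_vector_derivative - (transpose (A s) *v lam s)) (at s within {0..T})"
    and q: "\<And>s. s \<in> {0..T} \<Longrightarrow> (q has_real_derivative hq s) (at s within {0..T})"
    and \<xi>: "is_traj T A f t x \<xi>" and f_bound: "\<And>r. r \<in> {t..T} \<Longrightarrow> norm (f r) \<le> F"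
  shows "((\<lambda>r. inner (lam r) (f r) + hq r) has_integral
      (inner (lam T) (\<xi> T) + q T) - (inner (lam t) (\<xi> t) + q t)) {t..T}"
proof -
  have sub: "{t..T} \<subseteq> {0..T}" using t by auto
  show ?thesis
  proof (rule adjoint_pairing_has_integral[OF continuous_on_coefficients(1)[OF t] _ _ \<xi> f_bound])
    show "(lam has_vector_derivative - (transpose (A s) *v lam s)) (at s within {t..T})"
      and "(q has_real_derivative hq s) (at s within {t..T})" if "s \<in> {t..T}" for s
      using lam[of s] q[of s] that sub
      by (auto intro: has_vector_derivative_within_subset has_field_derivative_subset)
  qed (use t in auto)
qed

lemma near_minimising_disturbance:
  fixes lam :: "real \<Rightarrow> real^'n"
  assumes t: "t \<in> {0..T}" and lam: "continuous_on {t..T} lam" and \<eta>: "\<eta> > 0"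
  obtains d where "d \<in> ctrl_set t T D"
    "\<And>r d'. r \<in> {t..T} \<Longrightarrow> d' \<in> D \<Longrightarrow> inner (- lam r) (E r *v d r) \<le> inner (- lam r) (E r *v d') + \<eta>"
proof -
  have "continuous_on {t..T} (\<lambda>r. transpose (E r) *v lam r)"
    by (intro continuous_on_matrix_vector_mult continuous_on_transpose continuous_on_coefficients(3)[OF t] lam)
  from measurable_near_argmax[OF _ this D_compact D_nonempty \<eta>]
  obtain d where "d \<in> borel_measurable (lebesgue_on {t..T})" "\<And>r. r \<in> {t..T} \<Longrightarrow> d r \<in> D"
    and near: "\<And>r d'. r \<in> {t..T} \<Longrightarrow> d' \<in> D \<Longrightarrow>
      inner (transpose (E r) *v lam r) d' \<le> inner (transpose (E r) *v lam r) (d r) + \<eta>"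
    using t by auto
  then have "d \<in> ctrl_set t T D" by (simp add: ctrl_set_def)
  moreover have "inner (- lam r) (E r *v d r) \<le> inner (- lam r) (E r *v d') + \<eta>"
    if "r \<in> {t..T}" "d' \<in> D" for r d'
    using near[OF that] unfolding inner_transpose_matrix_vector inner_minus_left by linarith
  ultimately show ?thesis using that by blast
qed

lemma adjoint_affine_le_value_fn:
  fixes g :: "real^'n \<Rightarrow> real" and lam :: "real \<Rightarrow> real^'n" and q :: "real \<Rightarrow> real"
  assumes g_lip: "L-lipschitz_on UNIV g" and g_convex: "convex_on UNIV g" and t: "t \<in> {0..T}"
    and lam: "\<And>s. s \<in> {0..T} \<Longrightarrow> (lam has_vector_derivative - (transpose (A s) *v lam s)) (at s within {0..T})"
    and q: "\<And>s. s \<in> {0..T} \<Longrightarrow> (q has_real_derivative hamil B E U D (lam s) s) (at s within {0..T})"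
    and subgrad: "lam T \<in> frechet_subdiff g xb" and q_T: "q T = - inner (lam T) xb + g xb"
  shows "inner (lam t) x + q t \<le> value_fn T A B E U D g t x"
proof (rule field_le_epsilon)
  fix \<eta> :: real assume \<eta>: "\<eta> > 0"
  have tT: "t \<le> T" using t by auto
  define \<eta>' where "\<eta>' = \<eta> / (T + 1)"
  have \<eta>': "\<eta>' > 0" "\<eta>' * (T - t) \<le> \<eta>"
    using \<eta> t by (auto simp: \<eta>'_def field_simps)
  have "continuous_on {0..T} lam"
    using lam by (meson continuous_on_eq_continuous_within has_vector_derivative_continuous)
  then obtain d where d: "d \<in> ctrl_set t T D"
    and d_near: "\<And>r d'. r \<in> {t..T} \<Longrightarrow> d' \<in> D \<Longrightarrow>
      inner (- lam r) (E r *v d r) \<le> inner (- lam r) (E r *v d') + \<eta>'"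
    using near_minimising_disturbance[OF t _ \<eta>'(1), of lam] continuous_on_subset[of "{0..T}" lam "{t..T}"] t
    by auto
  obtain F where F: "\<And>s u d. s \<in> {0..T} \<Longrightarrow> u \<in> U \<Longrightarrow> d \<in> D \<Longrightarrow> norm (B s *v u + E s *v d) \<le> F"
    using forcing_bound by metis
  have "inner (lam t) x + q t - \<eta> \<le> value_fn T A B E U D g t x"
  proof (rule value_fn_ge[OF g_lip t nonanticip_open_loop[OF d]])
    fix u assume u: "u \<in> ctrl_set t T U"
    obtain \<xi> where \<xi>: "is_traj T A (\<lambda>r. B r *v u r + E r *v d r) t x \<xi>"
      and endpoint: "endpoint T A B E t x u d = \<xi> T"
      by (rule endpoint_traj[OF t u d])
    have integrand: "- \<eta>' \<le> inner (lam r) (B r *v u r + E r *v d r) + hamil B E U D (lam r) r"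
      if r: "r \<in> {t..T}" for r
    proof -
      have "u r \<in> U" "d r \<in> D" using u d r by (auto simp: ctrl_set_def)
      from hamil_ge[where lam="lam r" and s=r and E=E and B=B, OF U_compact D_compact D_nonempty this d_near[OF r]]
      show ?thesis by (simp add: inner_add_right)
    qed
    have "norm (B r *v u r + E r *v d r) \<le> F" if "r \<in> {t..T}" for r
      using F[of r "u r" "d r"] u d t that by (simp add: ctrl_set_def)
    note pairing = adjoint_pairing_along_response[where hq="\<lambda>s. hamil B E U D (lam s) s", OF t lam q \<xi> this]
    have "((\<lambda>_. - \<eta>') has_integral - \<eta>' * (T - t)) {t..T}"
      using has_integral_const_real[of "- \<eta>'" t T] tT by (simp add: mult.commute)
    from has_integral_le[OF this pairing integrand]
    have "- \<eta>' * (T - t) \<le> (inner (lam T) (\<xi> T) + q T) - (inner (lam t) (\<xi> t) + q t)" .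
    moreover have "inner (lam T) (\<xi> T) + q T \<le> g (\<xi> T)"
      using frechet_subdiff_convex_le[OF g_convex subgrad, of "\<xi> T"] q_T by (simp add: inner_diff_right)
    ultimately show "inner (lam t) x + q t - \<eta> \<le> g (endpoint T A B E t x u d)"
      using is_traj_initial[OF \<xi> tT] \<eta>' endpoint by (simp add: algebra_simps)
  qed
  then show "inner (lam t) x + q t \<le> value_fn T A B E U D g t x + \<eta>" by simp
qed

lemma Wset_bounded:
  obtains F where "F \<ge> 0" "\<And>s \<omega>. s \<in> {0..T} \<Longrightarrow> \<omega> \<in> Wset B E U D s \<Longrightarrow> norm \<omega> \<le> F"
proof -
  obtain F where "F \<ge> 0"
    and F: "\<And>s u d. s \<in> {0..T} \<Longrightarrow> u \<in> U \<Longrightarrow> d \<in> D \<Longrightarrow> norm (B s *v u + E s *v d) \<le> F"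
    using forcing_bound by metis
  obtain d where d: "d \<in> D" using D_nonempty by blast
  show ?thesis
  proof (rule that[OF \<open>F \<ge> 0\<close>])
    fix s \<omega> assume s: "s \<in> {0..T}" and "\<omega> \<in> Wset B E U D s"
    then obtain u where "u \<in> U" "\<omega> = B s *v u + E s *v d"
      using Wset_decompose[OF _ d] by blast
    then show "norm \<omega> \<le> F" using F[OF s _ d] by simp
  qed
qed

lemma adjoint_pairing_nonincreasing_along_extremal:
  fixes lam \<omega> \<xi> :: "real \<Rightarrow> real^'n" and q :: "real \<Rightarrow> real"
  assumes W: "\<And>s. s \<in> {0..T} \<Longrightarrow> msum (Wset B E U D s) ((\<lambda>d. - (E s *v d)) ` D) = (\<lambda>u. B s *v u) ` U"
    and t: "t \<in> {0..T}"
    and lam: "\<And>s. s \<in> {0..T} \<Longrightarrow> (lam has_vector_derivative - (transpose (A s) *v lam s)) (at s within {0..T})"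
    and q: "\<And>s. s \<in> {0..T} \<Longrightarrow> (q has_real_derivative hamil B E U D (lam s) s) (at s within {0..T})"
    and \<omega>: "\<And>s. s \<in> {t..T} \<Longrightarrow> \<omega> s \<in> Wset B E U D s"
    and \<xi>: "is_traj T A \<omega> t x \<xi>"
    and extremal: "AE s in lebesgue_on {t..T}. \<forall>w\<in>Wset B E U D s. inner (- lam s) w \<le> inner (- lam s) (\<omega> s)"
  shows "inner (lam T) (\<xi> T) + q T \<le> inner (lam t) (\<xi> t) + q t"
proof -
  obtain F where F: "\<And>s \<omega>. s \<in> {0..T} \<Longrightarrow> \<omega> \<in> Wset B E U D s \<Longrightarrow> norm \<omega> \<le> F"
    using Wset_bounded by metis
  have "norm (\<omega> r) \<le> F" if "r \<in> {t..T}" for r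
    using F[OF _ \<omega>[OF that]] t that by auto
  note pairing = adjoint_pairing_along_response[where hq="\<lambda>s. hamil B E U D (lam s) s", OF t lam q \<xi> this]
  \<comment> \<open>Each \<open>B s *v u\<close> splits as \<open>w - E s *v d\<close> with \<open>w \<in> Wset\<close>, so \<open>\<omega> s\<close> dominates the Hamiltonian.\<close>
  have pointwise: "inner (lam r) (\<omega> r) + hamil B E U D (lam r) r \<le> 0"
    if r: "r \<in> {t..T}" and max: "\<forall>w\<in>Wset B E U D r. inner (- lam r) w \<le> inner (- lam r) (\<omega> r)" for r
  proof -
    have "hamil B E U D (lam r) r \<le> inner (- lam r) (\<omega> r)"
    proof (rule hamil_le[OF U_compact U_nonempty D_compact])
      fix u assume "u \<in> U"
      then have "B r *v u \<in> msum (Wset B E U D r) ((\<lambda>d. - (E r *v d)) ` D)"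
        using W[of r] r t by auto
      then obtain w d where "w \<in> Wset B E U D r" "d \<in> D" "B r *v u = w + - (E r *v d)"
        unfolding msum_def by auto
      then show "\<exists>d\<in>D. inner (- lam r) (B r *v u + E r *v d) \<le> inner (- lam r) (\<omega> r)"
        using max by (intro bexI[of _ d]) auto
    qed
    then show ?thesis by simp
  qed
  have "AE r in lebesgue_on {t..T}. inner (lam r) (\<omega> r) + hamil B E U D (lam r) r \<le> 0"
    by (rule lebesgue_on_mono[OF extremal], rule pointwise)
  from integral_nonpos_AE[OF has_integral_integrable[OF pairing] this] pairing
  show ?thesis by (simp add: integral_unique)
qed

end

section \<open>Tracking a trajectory of the reduced system\<close>

lemma Wset_tracking_inner_le:
  assumes \<omega>: "\<omega> \<in> Wset B E U D r" and D: "compact D" "D \<noteq> {}" and d: "d \<in> D" and u: "u \<in> U"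
    and u_min: "\<And>v. v \<in> U \<Longrightarrow> inner e (B s *v u) \<le> inner e (B s *v v)"
    and R: "\<And>v. v \<in> U \<Longrightarrow> norm v \<le> R"
  shows "inner e (B r *v u + E r *v d - \<omega>) \<le> norm e * (norm (B r - B s) * (2 * R))"
proof -
  have "\<exists>d'\<in>D. \<forall>d\<in>D. inner (transpose (E r) *v e) d \<le> inner (transpose (E r) *v e) d'"
    by (rule continuous_attains_sup[OF D]) (intro continuous_intros)
  then obtain d' where d': "d' \<in> D" "\<And>d. d \<in> D \<Longrightarrow> inner e (E r *v d) \<le> inner e (E r *v d')"
    unfolding inner_transpose_matrix_vector by blast
  obtain u' where u': "u' \<in> U" "\<omega> = B r *v u' + E r *v d'"
    using Wset_decompose[OF \<omega> d'(1)] by blast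
  have "inner e (B r *v u + E r *v d - \<omega>)
      = inner e (B s *v u - B s *v u') + inner e ((B r - B s) *v (u - u')) + (inner e (E r *v d) - inner e (E r *v d'))"
    by (simp add: u'(2) algebra_simps)
  also have "\<dots> \<le> 0 + norm e * (norm (B r - B s) * (2 * R)) + 0"
  proof (intro add_mono)
    show "inner e (B s *v u - B s *v u') \<le> 0" using u_min[OF u'(1)] by (simp add: inner_diff_right)
    show "inner e (E r *v d) - inner e (E r *v d') \<le> 0" using d'(2)[OF d] by simp
    have "norm (u - u') \<le> 2 * R" using norm_triangle_ineq4[of u u'] R[OF u] R[OF u'(1)] by simp
    then have "norm ((B r - B s) *v (u - u')) \<le> norm (B r - B s) * (2 * R)"
      by (meson norm_ge_zero norm_matrix_vector_mult_le mult_left_mono order_trans)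
    then show "inner e ((B r - B s) *v (u - u')) \<le> norm e * (norm (B r - B s) * (2 * R))"
      by (meson norm_cauchy_schwarz mult_left_mono norm_ge_zero order_trans)
  qed
  finally show ?thesis by simp
qed

lemma grid_error_accumulation:
  fixes a :: "nat \<Rightarrow> real"
  assumes step: "\<And>j. j < N \<Longrightarrow> a (Suc j) \<le> (1 + 2 * \<alpha> * h) * a j
      + (2 * \<alpha> * M * K * h ^ 2 + 2 * h * (M * (\<tau> * (2 * R))) + K ^ 2 * h ^ 2)"
    and a0: "a 0 \<le> 0" and nonneg: "\<alpha> \<ge> 0" "h > 0" "M \<ge> 0" "K \<ge> 0" "R > 0" "\<tau> \<ge> 0"
    and Nh: "real N * h = L"
  shows "a N \<le> exp (2 * \<alpha> * L) * L * (2 * \<alpha> * M * K + K\<^sup>2 + 4 * M * R) * (h + \<tau>)"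
proof -
  have L: "L \<ge> 0" using Nh nonneg(2) by (metis less_imp_le mult_nonneg_nonneg of_nat_0_le_iff)
  have "a N \<le> exp (real N * (2 * \<alpha> * h)) * real N * (2 * \<alpha> * M * K * h ^ 2 + 2 * h * (M * (\<tau> * (2 * R))) + K ^ 2 * h ^ 2)"
    using nonneg by (intro discrete_gronwall[OF step a0]) auto
  also have "\<dots> = exp (2 * \<alpha> * L) * L * ((2 * \<alpha> * M * K + K ^ 2) * h + 4 * M * R * \<tau>)"
    by (simp add: power2_eq_square algebra_simps flip: Nh)
  also have "\<dots> \<le> exp (2 * \<alpha> * L) * L * ((2 * \<alpha> * M * K + K ^ 2 + 4 * M * R) * (h + \<tau>))"
  proof (rule mult_left_mono)
    have "0 \<le> (2 * \<alpha> * M * K + K ^ 2) * \<tau>" "0 \<le> 4 * M * R * h"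
      using nonneg by simp_all
    then show "(2 * \<alpha> * M * K + K ^ 2) * h + 4 * M * R * \<tau> \<le> (2 * \<alpha> * M * K + K ^ 2 + 4 * M * R) * (h + \<tau>)"
      by (simp add: algebra_simps)
  qed (use L in simp)
  finally show ?thesis by (simp add: mult.assoc)
qed

lemma tracking_error_step:
  fixes A :: "real \<Rightarrow> real^'n^'n" and f \<omega> :: "real \<Rightarrow> real^'n"
  assumes s: "t \<le> s" "s \<le> s + h" "s + h \<le> T"
    and \<alpha>: "\<alpha> \<ge> 0" "\<And>r y. r \<in> {t..T} \<Longrightarrow> norm (A r *v y) \<le> \<alpha> * norm y"
    and \<xi>: "is_traj T A f t x \<xi>" and \<xi>s: "is_traj T A \<omega> t x \<xi>s"
    and M: "\<And>r. r \<in> {t..T} \<Longrightarrow> norm (\<xi> r - \<xi>s r) \<le> M"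
    and K: "\<And>r. r \<in> {t..T} \<Longrightarrow> norm (A r *v (\<xi> r - \<xi>s r) + (f r - \<omega> r)) \<le> K"
    and \<rho>: "\<And>r. r \<in> {s..<s + h} \<Longrightarrow> inner (\<xi> s - \<xi>s s) (f r - \<omega> r) \<le> \<rho>"
  shows "norm (\<xi> (s + h) - \<xi>s (s + h)) ^ 2 \<le> (1 + 2 * \<alpha> * h) * norm (\<xi> s - \<xi>s s) ^ 2
           + (2 * \<alpha> * M * K * h ^ 2 + 2 * h * \<rho> + K ^ 2 * h ^ 2)"
proof -
  define e where "e r = \<xi> r - \<xi>s r" for r
  define \<Phi> where "\<Phi> r = A r *v e r + (f r - \<omega> r)" for r
  have "(\<lambda>r. (A r *v \<xi> r + f r) - (A r *v \<xi>s r + \<omega> r)) = \<Phi>"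
    by (auto simp: \<Phi>_def e_def matrix_vector_mult_diff_distrib)
  then have \<Phi>: "(\<Phi> has_integral e s2 - e s1) {s1..s2}" if "t \<le> s1" "s1 \<le> s2" "s2 \<le> T" for s1 s2
    using has_integral_diff[OF is_traj_has_integral[OF \<xi> that] is_traj_has_integral[OF \<xi>s that]]
    by (simp add: e_def algebra_simps)
  have K0: "K \<ge> 0" using K[of t] s by (meson atLeastAtMost_iff norm_ge_zero order_trans order_refl)
  have \<Phi>_bound: "norm (\<Phi> r) \<le> K" if "r \<in> {t..T}" for r using K[OF that] by (simp add: \<Phi>_def e_def)
  define \<Delta> where "\<Delta> = e (s + h) - e s"
  have \<Delta>: "(\<Phi> has_integral \<Delta>) {s..s + h}" unfolding \<Delta>_def by (rule \<Phi>[OF s])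
  have "norm \<Delta> \<le> K * h"
    using has_integral_bound_real[OF K0 finite.emptyI \<Delta>] \<Phi>_bound s by auto
  \<comment> \<open>Over one step the error moves by at most \<open>K h\<close>, so \<open>A r *v e r\<close> is controlled by \<open>e s\<close>.\<close>
  have e_close: "norm (e r) \<le> norm (e s) + K * h" if r: "r \<in> {s..s + h}" for r
  proof -
    have "norm (e r - e s) \<le> K * (r - s)"
      using has_integral_bound_real[OF K0 finite.emptyI \<Phi>[of s r]] \<Phi>_bound r s by auto
    also have "\<dots> \<le> K * h" using r K0 by (intro mult_left_mono) auto
    finally show ?thesis using norm_triangle_sub[of "e r" "e s"] by linarith
  qed
  define c where "c = \<alpha> * norm (e s) ^ 2 + \<alpha> * M * K * h + \<rho>"
  have "inner (e s) (\<Phi> r) \<le> c" if r: "r \<in> {s..s + h} - {s + h}" for r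
  proof -
    have rT: "r \<in> {t..T}" using r s by auto
    have "norm (A r *v e r) \<le> \<alpha> * (norm (e s) + K * h)"
      using \<alpha>(2)[OF rT, of "e r"] e_close[of r] r \<alpha>(1) by (meson DiffD1 mult_left_mono order_trans)
    then have "inner (e s) (A r *v e r) \<le> norm (e s) * (\<alpha> * (norm (e s) + K * h))"
      by (meson norm_cauchy_schwarz mult_left_mono norm_ge_zero order_trans)
    also have "\<dots> = \<alpha> * norm (e s) ^ 2 + \<alpha> * norm (e s) * K * h"
      by (simp add: power2_eq_square algebra_simps)
    also have "\<dots> \<le> \<alpha> * norm (e s) ^ 2 + \<alpha> * M * K * h"
      using M[of s] s K0 \<alpha>(1) by (intro add_left_mono mult_right_mono mult_left_mono) (auto simp: e_def)
    finally show ?thesis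
      using \<rho>[of r] r by (simp add: \<Phi>_def c_def inner_add_right e_def)
  qed
  moreover have "((\<lambda>r. inner (e s) (\<Phi> r)) has_integral inner (e s) \<Delta>) {s..s + h}"
    using has_integral_linear[OF \<Delta> bounded_linear_inner_right[of "e s"]] by (simp add: o_def)
  ultimately have "inner (e s) \<Delta> \<le> c * h"
    using has_integral_le_const_except_finite[of _ _ s "s + h" "{s + h}"] s by fastforce
  have "norm (e (s + h)) ^ 2 = norm (e s) ^ 2 + 2 * inner (e s) \<Delta> + norm \<Delta> ^ 2"
    by (simp add: \<Delta>_def power2_norm_eq_inner inner_commute algebra_simps)
  also have "\<dots> \<le> norm (e s) ^ 2 + 2 * (c * h) + (K * h) ^ 2"
    using \<open>inner (e s) \<Delta> \<le> c * h\<close> \<open>norm \<Delta> \<le> K * h\<close> by (intro add_mono power_mono) auto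
  also have "\<dots> = (1 + 2 * \<alpha> * h) * norm (e s) ^ 2 + (2 * \<alpha> * M * K * h ^ 2 + 2 * h * \<rho> + K ^ 2 * h ^ 2)"
    by (simp add: c_def power2_eq_square algebra_simps)
  finally show ?thesis by (simp add: e_def)
qed

context linear_game
begin

lemma endpoint_eq_at:
  assumes t: "t \<in> {0..T}" and s: "s \<in> {t..T}"
    and \<xi>: "is_traj T A (\<lambda>r. B r *v u r + E r *v d r) t x \<xi>"
  shows "endpoint s A B E t x u d = \<xi> s"
proof (rule endpoint_eq[OF _ _ is_traj_restrict[OF \<xi>]])
  show "continuous_on {t..s} A"
    using continuous_on_subset[OF continuous_on_coefficients(1)[OF t]] s by auto
qed (use s in auto)

lemma endpoint_eq_if_controls_AE_eq:
  assumes t: "t \<in> {0..T}" and s: "s \<in> {t..T}" and \<delta>: "\<delta> \<in> nonanticip t T U D"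
    and u: "u \<in> ctrl_set t T U" and u': "u' \<in> ctrl_set t T U"
    and agree: "AE r in lebesgue_on {t..s}. u r = u' r"
  shows "endpoint s A B E t x u (\<delta> u) = endpoint s A B E t x u' (\<delta> u')"
proof -
  have d: "\<delta> u \<in> ctrl_set t T D" "\<delta> u' \<in> ctrl_set t T D"
    using \<delta> u u' by (auto simp: nonanticip_def)
  have "AE r in lebesgue_on {t..s}. \<delta> u r = \<delta> u' r"
    using \<delta> u u' s agree unfolding nonanticip_def by blast
  with agree have "AE r in lebesgue_on {t..s}. u r = u' r \<and> \<delta> u r = \<delta> u' r" by auto
  then obtain N where N: "negligible N" "\<And>r. r \<in> {t..s} \<Longrightarrow> r \<notin> N \<Longrightarrow> u r = u' r \<and> \<delta> u r = \<delta> u' r"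
    using AE_lebesgue_on_imp_negligible by blast
  obtain \<xi> where \<xi>: "is_traj T A (\<lambda>r. B r *v u r + E r *v \<delta> u r) t x \<xi>"
    using endpoint_traj[OF t u d(1)] by blast
  obtain \<xi>' where \<xi>': "is_traj T A (\<lambda>r. B r *v u' r + E r *v \<delta> u' r) t x \<xi>'"
    using endpoint_traj[OF t u' d(2)] by blast
  have "\<xi> s = \<xi>' s"
    using s N(2) by (intro is_traj_eq_if_forcing_ae_eq[OF _ _ continuous_on_coefficients(1)[OF t] \<xi> \<xi>' N(1)]) auto
  then show ?thesis
    using endpoint_eq_at[OF t s \<xi>] endpoint_eq_at[OF t s \<xi>'] by simp
qed

lemma nonanticip_grid_feedback:
  fixes x :: "real^'n" and \<kappa> :: "nat \<Rightarrow> real^'n \<Rightarrow> real^'m"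
  assumes t: "t \<in> {0..T}" "t < T" and N: "N \<ge> 1" and \<delta>: "\<delta> \<in> nonanticip t T U D"
    and \<kappa>: "\<And>j y. \<kappa> j y \<in> U"
  defines "state c j \<equiv> endpoint (t + real j * ((T - t) / real N)) A B E t x
      (grid_control t T N c) (\<delta> (grid_control t T N c))"
  obtains c where "\<And>i. c i \<in> U" "\<And>j. j < N \<Longrightarrow> c j = \<kappa> j (state c j)"
proof -
  define h where "h = (T - t) / real N"
  obtain u0 where u0: "u0 \<in> U" using U_nonempty by blast
  define cs where "cs = rec_nat (\<lambda>_. u0) (\<lambda>j c. c(j := \<kappa> j (state c j)))"
  have cs_U: "cs j i \<in> U" for j i
    by (induction j arbitrary: i) (auto simp: cs_def u0 \<kappa>)
  \<comment> \<open>By non-anticipativity the state at the \<open>j\<close>-th grid point only sees the entries below \<open>j\<close>.\<close>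
  have state_eq: "state (cs N) j = state (cs j) j" if j: "j \<le> N" for j
  proof -
    have sj: "t + real j * h \<in> {t..T}"
      using j t N mult_right_mono[of "real j" "real N" h] by (auto simp: h_def)
    have "grid_control t T N (cs N) r = grid_control t T N (cs j) r"
      if "r \<in> {t..t + real j * h}" "r \<noteq> t + real j * h" for r
      using that sj t(2) N
      by (intro grid_control_eq_before) (auto simp: h_def cs_def intro!: rec_nat_fun_upd_stable j)
    then have "AE r in lebesgue_on {t..t + real j * h}.
        grid_control t T N (cs N) r = grid_control t T N (cs j) r"
      by (rule AE_lebesgue_on_except_point)
    then show ?thesis
      unfolding state_def h_def[symmetric]
      by (intro endpoint_eq_if_controls_AE_eq[OF t(1) sj \<delta>] grid_control_in_ctrl_set cs_U)
  qed
  show ?thesis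
  proof (rule that[of "cs N"])
    show "cs N i \<in> U" for i by (rule cs_U)
    fix j assume "j < N"
    then show "cs N j = \<kappa> j (state (cs N) j)"
      using state_eq[of j] by (simp add: cs_def rec_nat_fun_upd_fixed)
  qed
qed

lemma grid_feedback_response:
  fixes x :: "real^'n" and \<kappa> :: "nat \<Rightarrow> real^'n \<Rightarrow> real^'m"
  assumes t: "t \<in> {0..T}" "t < T" and N: "N \<ge> 1" and \<delta>: "\<delta> \<in> nonanticip t T U D"
    and \<kappa>: "\<And>j y. \<kappa> j y \<in> U"
  obtains u \<xi> where "u \<in> ctrl_set t T U" "is_traj T A (\<lambda>r. B r *v u r + E r *v \<delta> u r) t x \<xi>"
    "endpoint T A B E t x u (\<delta> u) = \<xi> T"
    "\<And>j r. j < N \<Longrightarrow> t + real j * ((T - t) / real N) \<le> r \<Longrightarrow> r < t + real (Suc j) * ((T - t) / real N) \<Longrightarrow>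
      u r = \<kappa> j (\<xi> (t + real j * ((T - t) / real N)))"
proof -
  obtain c where c: "\<And>i. c i \<in> U" and feedback: "\<And>j. j < N \<Longrightarrow> c j = \<kappa> j
      (endpoint (t + real j * ((T - t) / real N)) A B E t x (grid_control t T N c) (\<delta> (grid_control t T N c)))"
    using nonanticip_grid_feedback[where \<kappa>=\<kappa> and x=x, OF t N \<delta> \<kappa>] by blast
  define u where "u = grid_control t T N c"
  have u: "u \<in> ctrl_set t T U" unfolding u_def by (rule grid_control_in_ctrl_set[OF c])
  then have "\<delta> u \<in> ctrl_set t T D" using \<delta> by (simp add: nonanticip_def)
  then obtain \<xi> where \<xi>: "is_traj T A (\<lambda>r. B r *v u r + E r *v \<delta> u r) t x \<xi>"
    and endpoint: "endpoint T A B E t x u (\<delta> u) = \<xi> T"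
    using endpoint_traj[OF t(1) u] by blast
  have "u r = \<kappa> j (\<xi> (t + real j * ((T - t) / real N)))"
    if j: "j < N" and r: "t + real j * ((T - t) / real N) \<le> r" "r < t + real (Suc j) * ((T - t) / real N)" for j r
  proof -
    have "real j * ((T - t) / real N) \<le> real N * ((T - t) / real N)"
      using j t by (intro mult_right_mono) auto
    then have sj: "t + real j * ((T - t) / real N) \<in> {t..T}" using t N by auto
    have "u r = c j" unfolding u_def by (rule grid_control_cell[OF t(2) N j r])
    also have "\<dots> = \<kappa> j (\<xi> (t + real j * ((T - t) / real N)))"
      using feedback[OF j] endpoint_eq_at[OF t(1) sj \<xi>] by (simp add: u_def)
    finally show ?thesis .
  qed
  then show ?thesis by (rule that[OF u \<xi> endpoint])
qed

lemma feedback_tracking_error: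
  fixes x :: "real^'n" and \<omega> \<xi>s :: "real \<Rightarrow> real^'n"
  assumes t: "t \<in> {0..T}" "t < T"
    and \<omega>: "\<And>s. s \<in> {t..T} \<Longrightarrow> \<omega> s \<in> Wset B E U D s" and \<xi>s: "is_traj T A \<omega> t x \<xi>s"
    and \<alpha>: "\<alpha> \<ge> 0" "\<And>s y. s \<in> {t..T} \<Longrightarrow> norm (A s *v y) \<le> \<alpha> * norm y"
    and R: "R > 0" "\<And>v. v \<in> U \<Longrightarrow> norm v \<le> R"
    and M: "M \<ge> 0" "\<And>u d \<xi> r. u \<in> ctrl_set t T U \<Longrightarrow> d \<in> ctrl_set t T D \<Longrightarrow>
      is_traj T A (\<lambda>r. B r *v u r + E r *v d r) t x \<xi> \<Longrightarrow> r \<in> {t..T} \<Longrightarrow> norm (\<xi> r - \<xi>s r) \<le> M"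
    and K: "K \<ge> 0" "\<And>u d \<xi> r. u \<in> ctrl_set t T U \<Longrightarrow> d \<in> ctrl_set t T D \<Longrightarrow>
      is_traj T A (\<lambda>r. B r *v u r + E r *v d r) t x \<xi> \<Longrightarrow> r \<in> {t..T} \<Longrightarrow>
      norm (A r *v (\<xi> r - \<xi>s r) + (B r *v u r + E r *v d r - \<omega> r)) \<le> K"
    and \<delta>: "\<delta> \<in> nonanticip t T U D" and N: "N \<ge> 1" and \<tau>: "\<tau> \<ge> 0"
    and osc: "\<And>j r. j < N \<Longrightarrow> r \<in> {t + real j * ((T - t) / real N)..t + real (Suc j) * ((T - t) / real N)} \<Longrightarrow>
      norm (B r - B (t + real j * ((T - t) / real N))) \<le> \<tau>"
  shows "\<exists>u\<in>ctrl_set t T U. norm (endpoint T A B E t x u (\<delta> u) - \<xi>s T) ^ 2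
    \<le> exp (2 * \<alpha> * (T - t)) * (T - t) * (2 * \<alpha> * M * K + K\<^sup>2 + 4 * M * R) * ((T - t) / real N + \<tau>)"
proof -
  have tT: "t \<le> T" using t by auto
  obtain am where am: "\<And>y s. am y s \<in> U" "\<And>y s v. v \<in> U \<Longrightarrow> inner y (B s *v am y s) \<le> inner y (B s *v v)"
    using linear_argmin_selection[OF U_compact U_nonempty] by blast
  define h where "h = (T - t) / real N"
  have h: "h > 0" "real N * h = T - t" using t N by (auto simp: h_def)
  define sg where "sg j = t + real j * h" for j
  have sg: "sg j \<in> {t..T}" if "j \<le> N" for j
    using that h mult_right_mono[of "real j" "real N" h] by (auto simp: sg_def)
  obtain u \<xi> where u: "u \<in> ctrl_set t T U" and \<xi>: "is_traj T A (\<lambda>r. B r *v u r + E r *v \<delta> u r) t x \<xi>"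
    and endpoint: "endpoint T A B E t x u (\<delta> u) = \<xi> T"
    and feedback: "\<And>j r. j < N \<Longrightarrow> t + real j * h \<le> r \<Longrightarrow> r < t + real (Suc j) * h \<Longrightarrow>
      u r = am (\<xi> (t + real j * h) - \<xi>s (t + real j * h)) (t + real j * h)"
    using grid_feedback_response[OF t N \<delta>, of "\<lambda>j y. am (y - \<xi>s (t + real j * h)) (t + real j * h)" x] am(1)
    unfolding h_def by blast
  have d: "\<delta> u \<in> ctrl_set t T D" using \<delta> u by (simp add: nonanticip_def)
  define f where "f r = B r *v u r + E r *v \<delta> u r" for r
  define e where "e r = \<xi> r - \<xi>s r" for r
  define \<rho> where "\<rho> = M * (\<tau> * (2 * R))"
  have step: "norm (e (sg (Suc j))) ^ 2 \<le> (1 + 2 * \<alpha> * h) * norm (e (sg j)) ^ 2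
      + (2 * \<alpha> * M * K * h ^ 2 + 2 * h * \<rho> + K ^ 2 * h ^ 2)" if j: "j < N" for j
  proof -
    have sj: "sg (Suc j) = sg j + h" by (simp add: sg_def algebra_simps)
    have "inner (e (sg j)) (f r - \<omega> r) \<le> \<rho>" if r: "r \<in> {sg j..<sg j + h}" for r
    proof -
      have rT: "r \<in> {t..T}" using r sg[of j] sg[of "Suc j"] j sj by auto
      have ur: "u r = am (e (sg j)) (sg j)"
        using feedback[OF j, of r] r by (simp add: sg_def e_def algebra_simps)
      have "inner (e (sg j)) (f r - \<omega> r) \<le> norm (e (sg j)) * (norm (B r - B (sg j)) * (2 * R))"
        unfolding f_def ur
        by (intro Wset_tracking_inner_le[OF \<omega>[OF rT] D_compact D_nonempty _ am(1) am(2) R(2)])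
          (use d rT in \<open>auto simp: ctrl_set_def\<close>)
      also have "\<dots> \<le> \<rho>"
        unfolding \<rho>_def using M(2)[OF u d \<xi> sg[of j]] osc[OF j, of r, folded h_def] r sj j R(1) \<tau> M(1)
        by (intro mult_mono) (auto simp: sg_def e_def)
      finally show ?thesis .
    qed
    then show ?thesis
      unfolding sj e_def
      by (intro tracking_error_step[OF _ _ _ \<alpha> \<xi>[folded f_def] \<xi>s M(2)[OF u d \<xi>] K(2)[OF u d \<xi>, folded f_def]])
        (use sg[of j] sg[of "Suc j"] j sj h in \<open>auto simp: e_def\<close>)
  qed
  have "norm (e (sg N)) ^ 2 \<le> exp (2 * \<alpha> * (T - t)) * (T - t) * (2 * \<alpha> * M * K + K\<^sup>2 + 4 * M * R) * (h + \<tau>)"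
    using \<alpha>(1) h M(1) K(1) \<tau> R(1) is_traj_initial[OF \<xi> tT] is_traj_initial[OF \<xi>s tT]
    by (intro grid_error_accumulation[where a="\<lambda>j. norm (e (sg j)) ^ 2"] step[unfolded \<rho>_def])
      (auto simp: e_def sg_def)
  then have "norm (\<xi> T - \<xi>s T) ^ 2 \<le> exp (2 * \<alpha> * (T - t)) * (T - t) * (2 * \<alpha> * M * K + K\<^sup>2 + 4 * M * R) * (h + \<tau>)"
    using h(2) by (simp add: e_def sg_def)
  then show ?thesis
    using u endpoint by (intro bexI[of _ u]) (auto simp: h_def)
qed

lemma grid_tracking_estimate:
  fixes x :: "real^'n" and \<omega> \<xi>s :: "real \<Rightarrow> real^'n"
  assumes t: "t \<in> {0..T}" "t < T"
    and \<omega>: "\<And>s. s \<in> {t..T} \<Longrightarrow> \<omega> s \<in> Wset B E U D s" and \<xi>s: "is_traj T A \<omega> t x \<xi>s"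
  obtains C where "C \<ge> 0"
    "\<And>\<delta> N \<tau>. \<delta> \<in> nonanticip t T U D \<Longrightarrow> N \<ge> 1 \<Longrightarrow> \<tau> \<ge> 0 \<Longrightarrow>
       (\<And>j r. j < N \<Longrightarrow> r \<in> {t + real j * ((T - t) / real N)..t + real (Suc j) * ((T - t) / real N)} \<Longrightarrow>
          norm (B r - B (t + real j * ((T - t) / real N))) \<le> \<tau>) \<Longrightarrow>
       \<exists>u\<in>ctrl_set t T U. norm (endpoint T A B E t x u (\<delta> u) - \<xi>s T) ^ 2 \<le> C * ((T - t) / real N + \<tau>)"
proof -
  have tT: "t \<le> T" using t by auto
  obtain \<alpha> where \<alpha>: "\<alpha> \<ge> 0" "\<And>s y. s \<in> {t..T} \<Longrightarrow> norm (A s *v y) \<le> \<alpha> * norm y"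
    using compact_continuous_matrix_bound[OF continuous_on_coefficients(1)[OF t(1)]] by auto
  obtain F where "F \<ge> 0"
    and F: "\<And>s u d. s \<in> {0..T} \<Longrightarrow> u \<in> U \<Longrightarrow> d \<in> D \<Longrightarrow> norm (B s *v u + E s *v d) \<le> F"
    using forcing_bound by metis
  obtain F\<omega> where "F\<omega> \<ge> 0" and F\<omega>: "\<And>s \<omega>. s \<in> {0..T} \<Longrightarrow> \<omega> \<in> Wset B E U D s \<Longrightarrow> norm \<omega> \<le> F\<omega>"
    using Wset_bounded by metis
  obtain R where R: "R > 0" "\<And>v. v \<in> U \<Longrightarrow> norm v \<le> R"
    using compact_imp_bounded[OF U_compact] unfolding bounded_pos by blast
  obtain Mr where Mr: "\<And>u d \<xi> r. u \<in> ctrl_set t T U \<Longrightarrow> d \<in> ctrl_set t T D \<Longrightarrow>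
      is_traj T A (\<lambda>r. B r *v u r + E r *v d r) t x \<xi> \<Longrightarrow> r \<in> {t..T} \<Longrightarrow> norm (\<xi> r) \<le> Mr"
    using response_bounded[OF t(1), where x=x] by blast
  obtain Ms where "Ms > 0" "\<And>y. y \<in> \<xi>s ` {t..T} \<Longrightarrow> norm y \<le> Ms"
    using compact_imp_bounded[OF compact_continuous_image[OF is_traj_continuous_on[OF \<xi>s tT] compact_Icc]]
    unfolding bounded_pos by blast
  define M where "M = max 0 Mr + Ms"
  have M: "M \<ge> 0" "\<And>u d \<xi> r. u \<in> ctrl_set t T U \<Longrightarrow> d \<in> ctrl_set t T D \<Longrightarrow>
      is_traj T A (\<lambda>r. B r *v u r + E r *v d r) t x \<xi> \<Longrightarrow> r \<in> {t..T} \<Longrightarrow> norm (\<xi> r - \<xi>s r) \<le> M"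
  proof -
    show "M \<ge> 0" using \<open>Ms > 0\<close> by (simp add: M_def)
    fix u d \<xi> r assume "u \<in> ctrl_set t T U" "d \<in> ctrl_set t T D"
      "is_traj T A (\<lambda>r. B r *v u r + E r *v d r) t x \<xi>" and r: "r \<in> {t..T}"
    from Mr[OF this] have "norm (\<xi> r) \<le> max 0 Mr" by simp
    moreover have "norm (\<xi>s r) \<le> Ms" using \<open>\<And>y. y \<in> \<xi>s ` {t..T} \<Longrightarrow> norm y \<le> Ms\<close> r by blast
    ultimately show "norm (\<xi> r - \<xi>s r) \<le> M"
      using norm_triangle_ineq4[of "\<xi> r" "\<xi>s r"] by (simp add: M_def)
  qed
  have K: "\<alpha> * M + F + F\<omega> \<ge> 0" "\<And>u d \<xi> r. u \<in> ctrl_set t T U \<Longrightarrow> d \<in> ctrl_set t T D \<Longrightarrow>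
      is_traj T A (\<lambda>r. B r *v u r + E r *v d r) t x \<xi> \<Longrightarrow> r \<in> {t..T} \<Longrightarrow>
      norm (A r *v (\<xi> r - \<xi>s r) + (B r *v u r + E r *v d r - \<omega> r)) \<le> \<alpha> * M + F + F\<omega>"
  proof -
    show "\<alpha> * M + F + F\<omega> \<ge> 0" using \<alpha>(1) M(1) \<open>F \<ge> 0\<close> \<open>F\<omega> \<ge> 0\<close> by simp
    fix u d \<xi> r assume ud: "u \<in> ctrl_set t T U" "d \<in> ctrl_set t T D"
      and \<xi>: "is_traj T A (\<lambda>r. B r *v u r + E r *v d r) t x \<xi>" and r: "r \<in> {t..T}"
    have "norm (B r *v u r + E r *v d r) \<le> F" "norm (\<omega> r) \<le> F\<omega>"
      using F[of r "u r" "d r"] F\<omega>[OF _ \<omega>[OF r]] ud t r by (auto simp: ctrl_set_def)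
    moreover have "norm (A r *v (\<xi> r - \<xi>s r)) \<le> \<alpha> * M"
      using \<alpha>(2)[OF r, of "\<xi> r - \<xi>s r"] mult_left_mono[OF M(2)[OF ud \<xi> r] \<alpha>(1)] by linarith
    ultimately show "norm (A r *v (\<xi> r - \<xi>s r) + (B r *v u r + E r *v d r - \<omega> r)) \<le> \<alpha> * M + F + F\<omega>"
      using norm_triangle_ineq[of "A r *v (\<xi> r - \<xi>s r)" "B r *v u r + E r *v d r - \<omega> r"]
        norm_triangle_ineq4[of "B r *v u r + E r *v d r" "\<omega> r"]
      by linarith
  qed
  show ?thesis
  proof (rule that)
    show "exp (2 * \<alpha> * (T - t)) * (T - t) * (2 * \<alpha> * M * (\<alpha> * M + F + F\<omega>) + (\<alpha> * M + F + F\<omega>)\<^sup>2 + 4 * M * R) \<ge> 0"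
      using M(1) R tT \<alpha>(1) K(1) by simp
    fix \<delta> N \<tau> assume \<delta>: "\<delta> \<in> nonanticip t T U D" and N: "N \<ge> 1" and \<tau>: "\<tau> \<ge> 0"
      and osc: "\<And>j r. j < N \<Longrightarrow> r \<in> {t + real j * ((T - t) / real N)..t + real (Suc j) * ((T - t) / real N)} \<Longrightarrow>
          norm (B r - B (t + real j * ((T - t) / real N))) \<le> \<tau>"
    show "\<exists>u\<in>ctrl_set t T U. norm (endpoint T A B E t x u (\<delta> u) - \<xi>s T) ^ 2
        \<le> exp (2 * \<alpha> * (T - t)) * (T - t) * (2 * \<alpha> * M * (\<alpha> * M + F + F\<omega>) + (\<alpha> * M + F + F\<omega>)\<^sup>2 + 4 * M * R)
          * ((T - t) / real N + \<tau>)"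
      by (rule feedback_tracking_error) (rule t \<omega> \<xi>s \<alpha> R M K \<delta> N \<tau> osc | assumption)+
  qed
qed

lemma tracking_control_exists:
  fixes x :: "real^'n" and \<omega> \<xi>s :: "real \<Rightarrow> real^'n"
  assumes t: "t \<in> {0..T}"
    and \<omega>: "\<And>s. s \<in> {t..T} \<Longrightarrow> \<omega> s \<in> Wset B E U D s" and \<xi>s: "is_traj T A \<omega> t x \<xi>s"
    and \<delta>: "\<delta> \<in> nonanticip t T U D" and \<epsilon>: "\<epsilon> > 0"
  shows "\<exists>u\<in>ctrl_set t T U. norm (endpoint T A B E t x u (\<delta> u) - \<xi>s T) \<le> \<epsilon>"
proof (cases "t = T")
  case True
  obtain u0 where "u0 \<in> U" using U_nonempty by blast
  then have u: "(\<lambda>_. u0) \<in> ctrl_set t T U" by (rule ctrl_set_const)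
  then have "\<delta> (\<lambda>_. u0) \<in> ctrl_set t T D" using \<delta> by (simp add: nonanticip_def)
  then obtain \<xi> where \<xi>: "is_traj T A (\<lambda>r. B r *v u0 + E r *v \<delta> (\<lambda>_. u0) r) t x \<xi>"
    and "endpoint T A B E t x (\<lambda>_. u0) (\<delta> (\<lambda>_. u0)) = \<xi> T"
    using endpoint_traj[OF t u] by blast
  moreover have "\<xi> T = x" "\<xi>s T = x"
    using is_traj_initial[OF \<xi>] is_traj_initial[OF \<xi>s] True by auto
  ultimately show ?thesis
    using u \<epsilon> by (intro bexI[of _ "\<lambda>_. u0"]) auto
next
  case False
  then have tT: "t < T" using t by auto
  obtain C where C: "C \<ge> 0" "\<And>\<delta> N \<tau>. \<delta> \<in> nonanticip t T U D \<Longrightarrow> N \<ge> 1 \<Longrightarrow> \<tau> \<ge> 0 \<Longrightarrow>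
       (\<And>j r. j < N \<Longrightarrow> r \<in> {t + real j * ((T - t) / real N)..t + real (Suc j) * ((T - t) / real N)} \<Longrightarrow>
          norm (B r - B (t + real j * ((T - t) / real N))) \<le> \<tau>) \<Longrightarrow>
       \<exists>u\<in>ctrl_set t T U. norm (endpoint T A B E t x u (\<delta> u) - \<xi>s T) ^ 2 \<le> C * ((T - t) / real N + \<tau>)"
    using grid_tracking_estimate[OF t tT \<omega> \<xi>s] by blast
  define \<tau> where "\<tau> = \<epsilon>\<^sup>2 / (2 * (C + 1))"
  have \<tau>: "\<tau> > 0" "C * \<tau> \<le> \<epsilon>\<^sup>2 / 2"
    using C(1) \<epsilon> by (auto simp: \<tau>_def field_simps)
  obtain \<delta>B where \<delta>B: "\<delta>B > 0"
    "\<And>N j r. (T - t) / real N < \<delta>B \<Longrightarrow> j < N \<Longrightarrow>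
      r \<in> {t + real j * ((T - t) / real N)..t + real (Suc j) * ((T - t) / real N)} \<Longrightarrow>
      norm (B r - B (t + real j * ((T - t) / real N))) \<le> \<tau>"
    using grid_oscillation_le[OF _ continuous_on_coefficients(2)[OF t] \<tau>(1)] tT by auto
  obtain N :: nat where N: "real N > max 1 (max ((T - t) / \<delta>B) (2 * (C + 1) * (T - t) / \<epsilon>\<^sup>2))"
    using reals_Archimedean2 by blast
  define h where "h = (T - t) / real N"
  have N1: "N \<ge> 1" using N by simp
  have h: "h < \<delta>B" "C * h \<le> \<epsilon>\<^sup>2 / 2"
  proof -
    have "T - t < real N * \<delta>B" using N \<delta>B(1) by (simp add: field_simps)
    then show "h < \<delta>B" using N1 by (simp add: h_def field_simps)
    have "2 * (C + 1) * (T - t) < real N * \<epsilon>\<^sup>2" using N \<epsilon> by (simp add: field_simps)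
    then have "(C + 1) * h \<le> \<epsilon>\<^sup>2 / 2" using N1 by (simp add: h_def field_simps)
    moreover have "h \<ge> 0" using tT by (simp add: h_def)
    ultimately show "C * h \<le> \<epsilon>\<^sup>2 / 2" using mult_right_mono[of C "C + 1" h] by linarith
  qed
  have "\<exists>u\<in>ctrl_set t T U. norm (endpoint T A B E t x u (\<delta> u) - \<xi>s T) ^ 2 \<le> C * (h + \<tau>)"
    unfolding h_def using h(1) by (intro C(2)[OF \<delta> N1 less_imp_le[OF \<tau>(1)]] \<delta>B(2)) (auto simp: h_def)
  moreover have "C * (h + \<tau>) \<le> \<epsilon>\<^sup>2" using h(2) \<tau>(2) by (simp add: distrib_left)
  ultimately show ?thesis
    using \<epsilon> by (meson order_trans power2_le_imp_le less_imp_le)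
qed

lemma value_fn_le_W_trajectory_endpoint:
  fixes g :: "real^'n \<Rightarrow> real" and \<omega> \<xi>s :: "real \<Rightarrow> real^'n"
  assumes g: "L-lipschitz_on UNIV g" and t: "t \<in> {0..T}"
    and \<omega>: "\<And>s. s \<in> {t..T} \<Longrightarrow> \<omega> s \<in> Wset B E U D s" and \<xi>s: "is_traj T A \<omega> t x \<xi>s"
  shows "value_fn T A B E U D g t x \<le> g (\<xi>s T)"
proof (rule value_fn_le[OF g t])
  fix \<delta> :: "(real \<Rightarrow> real^'m) \<Rightarrow> real \<Rightarrow> real^'l" and \<eta> :: real
  assume \<delta>: "\<delta> \<in> nonanticip t T U D" and \<eta>: "\<eta> > 0"
  have L: "L \<ge> 0" using g by (simp add: lipschitz_on_def)
  obtain u where u: "u \<in> ctrl_set t T U" and close: "norm (endpoint T A B E t x u (\<delta> u) - \<xi>s T) \<le> \<eta> / (L + 1)"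
    using tracking_control_exists[OF t \<omega> \<xi>s \<delta>, of "\<eta> / (L + 1)"] \<eta> L by auto
  have "g (endpoint T A B E t x u (\<delta> u)) - g (\<xi>s T) \<le> L * norm (endpoint T A B E t x u (\<delta> u) - \<xi>s T)"
    using lipschitz_onD[OF g, of "endpoint T A B E t x u (\<delta> u)" "\<xi>s T"] by (simp add: dist_norm dist_real_def)
  also have "\<dots> \<le> L * (\<eta> / (L + 1))" using close L by (rule mult_left_mono)
  finally have "g (endpoint T A B E t x u (\<delta> u)) \<le> g (\<xi>s T) + L * (\<eta> / (L + 1))" by simp
  also have "L * (\<eta> / (L + 1)) \<le> \<eta>" using L \<eta> by (simp add: field_simps)
  finally show "\<exists>u\<in>ctrl_set t T U. g (endpoint T A B E t x u (\<delta> u)) \<le> g (\<xi>s T) + \<eta>"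
    using u by auto
qed

end

section \<open>Attaining the levels\<close>

lemma vlow_family_finite:
  fixes N :: nat and nk :: "nat \<Rightarrow> nat"
  shows "finite {inner (lam i k t) x + q i k t | i k. k \<in> {1..N} \<and> i \<in> {1..nk k}}"
proof -
  have "{inner (lam i k t) x + q i k t | i k. k \<in> {1..N} \<and> i \<in> {1..nk k}}
      = (\<lambda>(k, i). inner (lam i k t) x + q i k t) ` (SIGMA k:{1..N}. {1..nk k})"
    by (auto; blast)
  then show ?thesis by simp
qed

lemma vlow_ge:
  "k \<in> {1..N} \<Longrightarrow> i \<in> {1..nk k} \<Longrightarrow> inner (lam i k t) x + q i k t \<le> vlow lam q N nk t x"
  unfolding vlow_def by (rule Max_ge[OF vlow_family_finite]) blast

lemma vlow_le:
  assumes "N \<ge> 1" "nk 1 \<ge> 1"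
    and "\<And>i k. k \<in> {1..N} \<Longrightarrow> i \<in> {1..nk k} \<Longrightarrow> inner (lam i k t) x + q i k t \<le> c"
  shows "vlow lam q N nk t x \<le> c"
proof -
  have "inner (lam 1 1 t) x + q 1 1 t \<in> {inner (lam i k t) x + q i k t | i k. k \<in> {1..N} \<and> i \<in> {1..nk k}}"
    using assms(1,2) by auto
  then show ?thesis
    unfolding vlow_def using assms(3) by (subst Max_le_iff[OF vlow_family_finite]) blast+
qed

context linear_game
begin

lemma extremal_trajectory_value:
  fixes g :: "real^'n \<Rightarrow> real" and lam \<xi> \<omega> :: "real \<Rightarrow> real^'n" and q :: "real \<Rightarrow> real"
  assumes g_lip: "L-lipschitz_on UNIV g" and g_convex: "convex_on UNIV g"
    and W: "\<And>s. s \<in> {0..T} \<Longrightarrow> msum (Wset B E U D s) ((\<lambda>d. - (E s *v d)) ` D) = (\<lambda>u. B s *v u) ` U"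
    and t: "t \<in> {0..T}"
    and lam: "\<And>s. s \<in> {0..T} \<Longrightarrow> (lam has_vector_derivative - (transpose (A s) *v lam s)) (at s within {0..T})"
    and q: "\<And>s. s \<in> {0..T} \<Longrightarrow> (q has_real_derivative hamil B E U D (lam s) s) (at s within {0..T})"
    and subgrad: "lam T \<in> frechet_subdiff g (\<xi> T)" and q_T: "q T = - inner (lam T) (\<xi> T) + g (\<xi> T)"
    and \<omega>: "\<And>s. s \<in> {t..T} \<Longrightarrow> \<omega> s \<in> Wset B E U D s" and \<xi>: "is_traj T A \<omega> t (\<xi> t) \<xi>"
    and extremal: "AE s in lebesgue_on {t..T}. \<forall>w\<in>Wset B E U D s. inner (- lam s) w \<le> inner (- lam s) (\<omega> s)"
  shows "value_fn T A B E U D g t (\<xi> t) = g (\<xi> T) \<and> inner (lam t) (\<xi> t) + q t = g (\<xi> T)"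
proof -
  have "value_fn T A B E U D g t (\<xi> t) \<le> g (\<xi> T)"
    by (rule value_fn_le_W_trajectory_endpoint[OF g_lip t \<omega> \<xi>])
  moreover have "g (\<xi> T) \<le> inner (lam t) (\<xi> t) + q t"
    using adjoint_pairing_nonincreasing_along_extremal[where lam=lam and q=q and \<omega>=\<omega>, OF W t lam q \<omega> \<xi> extremal]
      q_T by simp
  moreover have "inner (lam t) (\<xi> t) + q t \<le> value_fn T A B E U D g t (\<xi> t)"
    by (rule adjoint_affine_le_value_fn[where lam=lam and q=q, OF g_lip g_convex t lam q subgrad q_T])
  ultimately show ?thesis by (intro conjI; linarith)
qed

end

theorem theorem4:
  fixes T :: real
    and A :: "real \<Rightarrow> real^'n^'n" and B :: "real \<Rightarrow> real^'m^'n" and E :: "real \<Rightarrow> real^'l^'n"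
    and U :: "(real^'m) set" and D :: "(real^'l) set"
    and g :: "real^'n \<Rightarrow> real"
    and N :: nat and nk :: "nat \<Rightarrow> nat" and \<gamma> :: "nat \<Rightarrow> real"
    and xb :: "nat \<Rightarrow> nat \<Rightarrow> real^'n" and p :: "nat \<Rightarrow> nat \<Rightarrow> real^'n"
    and lam :: "nat \<Rightarrow> nat \<Rightarrow> real \<Rightarrow> real^'n" and q :: "nat \<Rightarrow> nat \<Rightarrow> real \<Rightarrow> real"
  assumes T_pos: "T > 0"
    and A_cont: "continuous_on {0..T} A"
    and B_cont: "continuous_on {0..T} B"
    and E_cont: "continuous_on {0..T} E"
    and U_cc: "compact U" "convex U" "U \<noteq> {}"
    and D_cc: "compact D" "convex D" "D \<noteq> {}"
    and g_cont: "continuous_on UNIV g"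
    and g_convex: "convex_on UNIV g"
    and g_lip: "\<exists>L. L-lipschitz_on UNIV g"
    and N_pos: "N \<ge> 1"
    and nk_pos: "\<forall>k\<in>{1..N}. nk k \<ge> 1"
    and levels: "\<forall>k\<in>{1..N}. \<gamma> k \<in> range g"
    and pts: "\<forall>k\<in>{1..N}. \<forall>i\<in>{1..nk k}. g (xb i k) = \<gamma> k"
    and subgr: "\<forall>k\<in>{1..N}. \<forall>i\<in>{1..nk k}. p i k \<in> frechet_subdiff g (xb i k)"
    and lam_ode: "\<forall>k\<in>{1..N}. \<forall>i\<in>{1..nk k}. \<forall>s\<in>{0..T}.
        (lam i k has_vector_derivative (- (transpose (A s) *v lam i k s))) (at s within {0..T})"
    and q_ode: "\<forall>k\<in>{1..N}. \<forall>i\<in>{1..nk k}. \<forall>s\<in>{0..T}.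
        (q i k has_real_derivative hamil B E U D (lam i k s) s) (at s within {0..T})"
    and lam_T: "\<forall>k\<in>{1..N}. \<forall>i\<in>{1..nk k}. lam i k T = p i k"
    and q_T: "\<forall>k\<in>{1..N}. \<forall>i\<in>{1..nk k}. q i k T = - inner (p i k) (xb i k) + \<gamma> k"
  shows
    "(\<forall>t\<in>{0..T}. \<forall>x. vlow lam q N nk t x \<le> value_fn T A B E U D g t x)
     \<and>
     ((\<forall>s\<in>{0..T}. Wset B E U D s \<noteq> {} \<and>
         msum (Wset B E U D s) ((\<lambda>d. - (E s *v d)) ` D) = (\<lambda>u. B s *v u) ` U)
      \<longrightarrow>
      (\<forall>t k i \<xi> \<omega>.
         t \<in> {0..T} \<and> k \<in> {1..N} \<and> i \<in> {1..nk k}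
         \<and> \<omega> \<in> borel_measurable (lebesgue_on {t..T})
         \<and> (\<forall>s\<in>{t..T}. \<omega> s \<in> Wset B E U D s)
         \<and> is_traj T A \<omega> t (\<xi> t) \<xi>
         \<and> \<xi> T = xb i k
         \<and> (AE s in lebesgue_on {t..T}. \<forall>w\<in>Wset B E U D s.
               inner (- lam i k s) w \<le> inner (- lam i k s) (\<omega> s))
         \<longrightarrow> value_fn T A B E U D g t (\<xi> t) = \<gamma> k \<and> vlow lam q N nk t (\<xi> t) = \<gamma> k))"
proof -
  obtain L where g_lip: "L-lipschitz_on UNIV g" using g_lip by blast
  interpret linear_game T A B E U D
    using A_cont B_cont E_cont U_cc D_cc by unfold_locales auto
  have affine_le: "inner (lam i k t) x + q i k t \<le> value_fn T A B E U D g t x"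
    if "t \<in> {0..T}" "k \<in> {1..N}" "i \<in> {1..nk k}" for t x i k
    using that lam_ode q_ode subgr lam_T q_T pts
    by (intro adjoint_affine_le_value_fn[OF g_lip g_convex, of t "lam i k" "q i k" "xb i k"]) auto
  have part_a: "\<forall>t\<in>{0..T}. \<forall>x. vlow lam q N nk t x \<le> value_fn T A B E U D g t x"
    using N_pos nk_pos affine_le by (auto intro!: vlow_le)
  show ?thesis
    apply (rule conjI[OF part_a], intro impI allI, elim conjE)
    subgoal premises prems for t k i \<xi> \<omega>
    proof -
      have ki: "k \<in> {1..N}" "i \<in> {1..nk k}" using prems by simp_all
      have "value_fn T A B E U D g t (\<xi> t) = g (\<xi> T) \<and> inner (lam i k t) (\<xi> t) + q i k t = g (\<xi> T)"
      proof (rule extremal_trajectory_value[OF g_lip g_convex, where \<omega>=\<omega>])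
        show "lam i k T \<in> frechet_subdiff g (\<xi> T)" "q i k T = - inner (lam i k T) (\<xi> T) + g (\<xi> T)"
          using subgr lam_T q_T pts ki prems by auto
      qed (use prems lam_ode q_ode ki in auto)
      moreover have "g (\<xi> T) = \<gamma> k" using pts ki prems by auto
      moreover have "inner (lam i k t) (\<xi> t) + q i k t \<le> vlow lam q N nk t (\<xi> t)"
        using ki by (rule vlow_ge)
      moreover have "vlow lam q N nk t (\<xi> t) \<le> value_fn T A B E U D g t (\<xi> t)"
        using part_a prems by blast
      ultimately show ?thesis by (intro conjI; linarith)
    qed
    done
qed

end
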